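(* Let $X$ be a finite connected poset, $\theta\in\mathcal{AM}(X)$ and $\mathfrak{C}\in\mathcal{C}(X)/{\sim}$. Then there exists a poset isomorphism or anti-isomorphism $\lambda:\mathrm{supp}(\mathfrak{C})\to\mathrm{supp}(\widetilde\theta(\mathfrak{C}))$ such that for all $x<y$ in $\mathrm{supp}(\mathfrak{C})$ one has $\theta(e_{xy})=e_{\lambda(x)\lambda(y)}$ if $\lambda$ is an isomorphism, and $\theta(e_{xy})=e_{\lambda(y)\lambda(x)}$ if $\lambda$ is an anti-isomorphism.
   Context: For $x<y$ in $X$, $e_{xy}$ denotes the corresponding basis element of the incidence algebra (the indicator of $(x,y)$); $B=\{e_{xy}:x<y\}$. $\mathcal{C}(X)$ is the set of maximal chains. For a bijection $\theta:B\to B$ and $C:u_1<\dots<u_m$ in $\mathcal{C}(X)$, $\theta$ is increasing on $C$ if there is $D:v_1<\dots<v_m$ in $\mathcal{C}(X)$ with $\theta(e_{u_iu_j})=e_{v_iv_j}$ for all $i<j$, and decreasing on $C$ if there is such $D$ with $\theta(e_{u_iu_j})=e_{v_{m-j+1}v_{m-i+1}}$ for all $i<j$; in both cases write $\theta(C)=D$. $\mathcal{M}(X)$ is the set of bijections $B\to B$ increasing or decreasing on every maximal chain. A walk is a sequence $u_0,\dots,u_m$ in which for each $i$ one of $u_i,u_{i+1}$ covers the other; closed if $u_0=u_m$. For a closed walk $\Gamma:u_0,\dots,u_m=u_0$ and $z\in X$: $s^+_{\theta,\Gamma}(z)=|\{i: u_i<u_{i+1},\ \exists w>z,\ \theta(e_{zw})=e_{u_iu_{i+1}}\}|$,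 $s^-_{\theta,\Gamma}(z)=|\{i: u_i>u_{i+1},\ \exists w>z,\ \theta(e_{zw})=e_{u_{i+1}u_i}\}|$, $t^+_{\theta,\Gamma}(z)=|\{i: u_i<u_{i+1},\ \exists w<z,\ \theta(e_{wz})=e_{u_iu_{i+1}}\}|$, $t^-_{\theta,\Gamma}(z)=|\{i: u_i>u_{i+1},\ \exists w<z,\ \theta(e_{wz})=e_{u_{i+1}u_i}\}|$ (with $0\le i\le m-1$). $\theta$ is admissible if $s^+-s^-=t^+-t^-$ at every $z$ for every closed walk $\Gamma$; $\mathcal{AM}(X)$ is the set of admissible elements of $\mathcal{M}(X)$. Two maximal chains are linked if they share an element lying in neither $\mathrm{Min}(X)$ nor $\mathrm{Max}(X)$; $\sim$ is the equivalence relation on $\mathcal{C}(X)$ generated by linkedness. The support of a class $\mathfrak{C}$ is $\mathrm{supp}(\mathfrak{C})=\bigcup_{C\in\mathfrak{C}}C$, with the induced order. For $\theta\in\mathcal{M}(X)$, $\widetilde\theta(\mathfrak{C})$ denotes the $\sim$-class of $\theta(C)$ for $C\in\mathfrak{C}$ (this does not depend on the choice of $C$). *)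

theory Defs
  imports Main
begin

text \<open>The poset is a finite carrier set X inside a type of class order, with the
induced order. The basis element e_xy of the incidence algebra is represented by
the pair (x,y); B is the set of pairs x<y in X.\<close>

definition basis :: "'a::order set \<Rightarrow> ('a \<times> 'a) set" where
  "basis X = {(x, y). x \<in> X \<and> y \<in> X \<and> x < y}"

definition is_chain :: "'a::order set \<Rightarrow> bool" where
  "is_chain C \<longleftrightarrow> (\<forall>x\<in>C. \<forall>y\<in>C. x \<le> y \<or> y \<le> x)"

definition max_chains :: "'a::order set \<Rightarrow> 'a set set" where
  "max_chains X = {C. C \<subseteq> X \<and> is_chain C \<and>
      \<not> (\<exists>C'. C' \<subseteq> X \<and> is_chain C' \<and> C \<subset> C')}"

definition connected_poset :: "'a::order set \<Rightarrow> bool" where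
  "connected_poset X \<longleftrightarrow> (\<forall>x\<in>X. \<forall>y\<in>X.
      (\<lambda>a b. a \<in> X \<and> b \<in> X \<and> (a \<le> b \<or> b \<le> a))\<^sup>*\<^sup>* x y)"

definition minimal_elems :: "'a::order set \<Rightarrow> 'a set" where
  "minimal_elems X = {x \<in> X. \<not> (\<exists>y\<in>X. y < x)}"

definition maximal_elems :: "'a::order set \<Rightarrow> 'a set" where
  "maximal_elems X = {x \<in> X. \<not> (\<exists>y\<in>X. x < y)}"

text \<open>theta increasing on C with theta(C) = D: the map u_i \<mapsto> v_i is an order
isomorphism f : C \<rightarrow> D with theta(e_{xy}) = e_{f x, f y}.\<close>
definition incr_to :: "'a::order set \<Rightarrow> ('a \<times> 'a \<Rightarrow> 'a \<times> 'a) \<Rightarrow> 'a set \<Rightarrow> 'a set \<Rightarrow> bool" where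
  "incr_to X \<theta> C D \<longleftrightarrow> D \<in> max_chains X \<and> (\<exists>f. bij_betw f C D \<and>
      (\<forall>x\<in>C. \<forall>y\<in>C. x < y \<longrightarrow> f x < f y) \<and>
      (\<forall>x\<in>C. \<forall>y\<in>C. x < y \<longrightarrow> \<theta> (x, y) = (f x, f y)))"

text \<open>theta decreasing on C with theta(C) = D: the map u_i \<mapsto> v_{m-i+1} is an
order anti-isomorphism f : C \<rightarrow> D with theta(e_{xy}) = e_{f y, f x}.\<close>
definition decr_to :: "'a::order set \<Rightarrow> ('a \<times> 'a \<Rightarrow> 'a \<times> 'a) \<Rightarrow> 'a set \<Rightarrow> 'a set \<Rightarrow> bool" where
  "decr_to X \<theta> C D \<longleftrightarrow> D \<in> max_chains X \<and> (\<exists>f. bij_betw f C D \<and>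
      (\<forall>x\<in>C. \<forall>y\<in>C. x < y \<longrightarrow> f y < f x) \<and>
      (\<forall>x\<in>C. \<forall>y\<in>C. x < y \<longrightarrow> \<theta> (x, y) = (f y, f x)))"

definition chain_image :: "'a::order set \<Rightarrow> ('a \<times> 'a \<Rightarrow> 'a \<times> 'a) \<Rightarrow> 'a set \<Rightarrow> 'a set \<Rightarrow> bool" where
  "chain_image X \<theta> C D \<longleftrightarrow> incr_to X \<theta> C D \<or> decr_to X \<theta> C D"

definition M_set :: "'a::order set \<Rightarrow> ('a \<times> 'a \<Rightarrow> 'a \<times> 'a) set" where
  "M_set X = {\<theta>. bij_betw \<theta> (basis X) (basis X) \<and>
      (\<forall>C\<in>max_chains X. (\<exists>D. incr_to X \<theta> C D) \<or> (\<exists>D. decr_to X \<theta> C D))}"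

definition covers :: "'a::order set \<Rightarrow> 'a \<Rightarrow> 'a \<Rightarrow> bool" where
  "covers X x y \<longleftrightarrow> x \<in> X \<and> y \<in> X \<and> x < y \<and> \<not> (\<exists>z\<in>X. x < z \<and> z < y)"

definition closed_walk :: "'a::order set \<Rightarrow> nat \<Rightarrow> (nat \<Rightarrow> 'a) \<Rightarrow> bool" where
  "closed_walk X m u \<longleftrightarrow> (\<forall>i\<le>m. u i \<in> X) \<and>
      (\<forall>i<m. covers X (u i) (u (Suc i)) \<or> covers X (u (Suc i)) (u i)) \<and> u m = u 0"

definition s_plus :: "'a::order set \<Rightarrow> ('a \<times> 'a \<Rightarrow> 'a \<times> 'a) \<Rightarrow> nat \<Rightarrow> (nat \<Rightarrow> 'a) \<Rightarrow> 'a \<Rightarrow> nat" where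
  "s_plus X \<theta> m u z = card {i. i < m \<and> u i < u (Suc i) \<and>
      (\<exists>w\<in>X. z < w \<and> \<theta> (z, w) = (u i, u (Suc i)))}"

definition s_minus :: "'a::order set \<Rightarrow> ('a \<times> 'a \<Rightarrow> 'a \<times> 'a) \<Rightarrow> nat \<Rightarrow> (nat \<Rightarrow> 'a) \<Rightarrow> 'a \<Rightarrow> nat" where
  "s_minus X \<theta> m u z = card {i. i < m \<and> u (Suc i) < u i \<and>
      (\<exists>w\<in>X. z < w \<and> \<theta> (z, w) = (u (Suc i), u i))}"

definition t_plus :: "'a::order set \<Rightarrow> ('a \<times> 'a \<Rightarrow> 'a \<times> 'a) \<Rightarrow> nat \<Rightarrow> (nat \<Rightarrow> 'a) \<Rightarrow> 'a \<Rightarrow> nat" where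
  "t_plus X \<theta> m u z = card {i. i < m \<and> u i < u (Suc i) \<and>
      (\<exists>w\<in>X. w < z \<and> \<theta> (w, z) = (u i, u (Suc i)))}"

definition t_minus :: "'a::order set \<Rightarrow> ('a \<times> 'a \<Rightarrow> 'a \<times> 'a) \<Rightarrow> nat \<Rightarrow> (nat \<Rightarrow> 'a) \<Rightarrow> 'a \<Rightarrow> nat" where
  "t_minus X \<theta> m u z = card {i. i < m \<and> u (Suc i) < u i \<and>
      (\<exists>w\<in>X. w < z \<and> \<theta> (w, z) = (u (Suc i), u i))}"

definition admissible :: "'a::order set \<Rightarrow> ('a \<times> 'a \<Rightarrow> 'a \<times> 'a) \<Rightarrow> bool" where
  "admissible X \<theta> \<longleftrightarrow> (\<forall>m u. closed_walk X m u \<longrightarrow> (\<forall>z\<in>X.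
      int (s_plus X \<theta> m u z) - int (s_minus X \<theta> m u z) =
      int (t_plus X \<theta> m u z) - int (t_minus X \<theta> m u z)))"

definition AM_set :: "'a::order set \<Rightarrow> ('a \<times> 'a \<Rightarrow> 'a \<times> 'a) set" where
  "AM_set X = {\<theta> \<in> M_set X. admissible X \<theta>}"

definition linked_rel :: "'a::order set \<Rightarrow> ('a set \<times> 'a set) set" where
  "linked_rel X = {(C, D). C \<in> max_chains X \<and> D \<in> max_chains X \<and>
      (\<exists>x\<in>C \<inter> D. x \<notin> minimal_elems X \<and> x \<notin> maximal_elems X)}"

definition sim_rel :: "'a::order set \<Rightarrow> ('a set \<times> 'a set) set" where
  "sim_rel X = Id_on (max_chains X) \<union> (linked_rel X)\<^sup>+"

definition supp :: "'a set set \<Rightarrow> 'a set" where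
  "supp \<CC> = \<Union> \<CC>"

end

(*
  For x < y in a maximal chain K, theta carries e_xy to a basis element of a maximal chain D,
  either preserving or reversing the order of K. Comparing the images of e_px and e_xq for
  triples p < x < q shows that this orientation, and the image of x, do not depend on the
  maximal chain through an interior point x. Hence theta, and likewise its inverse psi on the
  basis, maps linked chains to linked chains and so permutes the ~-classes.

  Admissibility says that along a closed walk of covers the signed sum of the boundaries
  delta_p - delta_q of the basis elements e_pq = psi(e_uv) of its steps vanishes. Summing along
  walks from a root therefore defines a potential H with H v - H u = delta_p - delta_q whenever
  u < v and psi(e_uv) = e_pq. On a class of chains the chain maps of psi share one orientation s,
  and H v +- delta_(mu v) is constant for a single map mu from its support to the support of the
  image class. Comparing with the formula for H v - H u gives psi(e_uv) = e_(mu u)(mu v), or its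
  reversal, for ALL u < v in the support, not only for pairs on a common chain of the class. So
  mu is onto and psi injects the pairs of the support into those of the image support; since psi
  permutes the finitely many classes, both counting inequalities are equalities, and the inverse
  of mu is the required isomorphism or anti-isomorphism.
*)
theory Submission
  imports Defs "HOL-Library.Function_Algebras"
begin

section \<open>Maximal chains of a finite poset\<close>

lemma max_chains_subset: "K \<in> max_chains X \<Longrightarrow> K \<subseteq> X"
  by (simp add: max_chains_def)

lemma max_chains_comparable: "K \<in> max_chains X \<Longrightarrow> x \<in> K \<Longrightarrow> y \<in> K \<Longrightarrow> x \<le> y \<or> y \<le> x"
  by (simp add: max_chains_def is_chain_def)

lemma max_chains_memI:
  assumes K: "K \<in> max_chains X" and "z \<in> X" and comp: "\<And>k. k \<in> K \<Longrightarrow> k \<le> z \<or> z \<le> k"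
  shows "z \<in> K"
proof (rule ccontr)
  assume "z \<notin> K"
  have "is_chain (insert z K)"
    using comp max_chains_comparable[OF K] unfolding is_chain_def by blast
  moreover have "insert z K \<subseteq> X" using assms max_chains_subset by blast
  ultimately show False
    using K \<open>z \<notin> K\<close> unfolding max_chains_def by blast
qed

lemma max_chains_no_strict_lower_bound:
  assumes "K \<in> max_chains X" "z \<in> X" "\<And>k. k \<in> K \<Longrightarrow> z < k"
  shows False
  using max_chains_memI[OF assms(1,2)] assms(3) by (meson less_imp_le order.irrefl)

lemma max_chains_no_strict_upper_bound:
  assumes "K \<in> max_chains X" "z \<in> X" "\<And>k. k \<in> K \<Longrightarrow> k < z"
  shows False
  using max_chains_memI[OF assms(1,2)] assms(3) by (meson less_imp_le order.irrefl)

lemma finite_chain_extends_to_max_chain: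
  assumes "finite X" "S \<subseteq> X" "is_chain S"
  shows "\<exists>K\<in>max_chains X. S \<subseteq> K"
proof -
  let ?T = "{T. S \<subseteq> T \<and> T \<subseteq> X \<and> is_chain T}"
  have "?T \<subseteq> Pow X" by blast
  then have "finite ?T" using assms(1) by (simp add: finite_subset)
  moreover have "?T \<noteq> {}" using assms by blast
  ultimately obtain K where "K \<in> ?T" "\<forall>T\<in>?T. K \<subseteq> T \<longrightarrow> K = T"
    by (meson finite_has_maximal)
  then have "K \<in> max_chains X" unfolding max_chains_def by (auto simp: psubset_eq dest: order.trans[of S K])
  with \<open>K \<in> ?T\<close> show ?thesis by blast
qed

lemma max_chains_below:
  assumes K: "K \<in> max_chains X" and "x \<in> K" "x \<notin> minimal_elems X"
  shows "\<exists>a\<in>K. a < x"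
proof (rule ccontr)
  assume none: "\<not> (\<exists>a\<in>K. a < x)"
  obtain y where y: "y \<in> X" "y < x"
    using assms max_chains_subset unfolding minimal_elems_def by blast
  have "y \<le> k" if "k \<in> K" for k
  proof -
    have "x \<le> k" using max_chains_comparable[OF K that \<open>x \<in> K\<close>] none that
      by (auto simp: order.order_iff_strict)
    then show ?thesis using y(2) by simp
  qed
  then have "y \<in> K" using max_chains_memI[OF K y(1)] by blast
  then show False using none y(2) by blast
qed

lemma max_chains_above:
  assumes K: "K \<in> max_chains X" and "x \<in> K" "x \<notin> maximal_elems X"
  shows "\<exists>b\<in>K. x < b"
proof (rule ccontr)
  assume none: "\<not> (\<exists>b\<in>K. x < b)"
  obtain y where y: "y \<in> X" "x < y"
    using assms max_chains_subset unfolding maximal_elems_def by blast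
  have "k \<le> y" if "k \<in> K" for k
  proof -
    have "k \<le> x" using max_chains_comparable[OF K that \<open>x \<in> K\<close>] none that
      by (auto simp: order.order_iff_strict)
    then show ?thesis using y(2) by simp
  qed
  then have "y \<in> K" using max_chains_memI[OF K y(1)] by blast
  then show False using none y(2) by blast
qed

lemma max_chains_covers:
  assumes K: "K \<in> max_chains X" and ab: "covers K a b"
  shows "covers X a b"
proof -
  have "z \<in> K" if z: "z \<in> X" "a < z" "z < b" for z
  proof (rule max_chains_memI[OF K z(1)])
    fix k assume k: "k \<in> K"
    have "k \<le> a \<or> a \<le> k" "k \<le> b \<or> b \<le> k"
      using ab k max_chains_comparable[OF K] unfolding covers_def by blast+
    moreover have "k \<noteq> a \<Longrightarrow> k \<noteq> b \<Longrightarrow> \<not> (a < k \<and> k < b)"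
      using ab k unfolding covers_def by blast
    ultimately show "k \<le> z \<or> z \<le> k"
      using z by (auto simp: order.order_iff_strict intro: order.strict_trans)
  qed
  then show ?thesis using ab max_chains_subset[OF K] unfolding covers_def by blast
qed

lemma rtranclp_covers_if_le:
  assumes "finite S" "a \<in> S" "b \<in> S" "a \<le> b"
  shows "(covers S)\<^sup>*\<^sup>* a b"
  using assms(3,4)
proof (induction "card {z \<in> S. a \<le> z \<and> z < b}" arbitrary: b rule: less_induct)
  case less
  show ?case
  proof (cases "a = b")
    case False
    let ?P = "{z \<in> S. a \<le> z \<and> z < b}"
    have "finite ?P" "?P \<noteq> {}" using less.prems False assms by auto
    then obtain c where c: "c \<in> ?P" "\<forall>z\<in>?P. c \<le> z \<longrightarrow> c = z"
      by (meson finite_has_maximal)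
    then have "covers S c b"
      using less.prems unfolding covers_def by (auto intro: order.trans less_imp_le)
    moreover have "{z \<in> S. a \<le> z \<and> z < c} \<subset> ?P" using c(1) by auto
    then have "card {z \<in> S. a \<le> z \<and> z < c} < card ?P"
      using \<open>finite ?P\<close> by (simp add: psubset_card_mono)
    then have "(covers S)\<^sup>*\<^sup>* a c" using less.hyps c(1) by blast
    ultimately show ?thesis by (rule rtranclp.rtrancl_into_rtrancl[rotated])
  qed simp
qed

lemma max_chains_pair:
  assumes conn: "connected_poset X" and ab: "\<exists>a\<in>X. \<exists>b\<in>X. a \<noteq> b" and K: "K \<in> max_chains X"
  shows "\<exists>x\<in>K. \<exists>y\<in>K. x < y"
proof (rule ccontr)
  assume no_pair: "\<not> ?thesis"
  obtain a where "a \<in> X" using ab by blast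
  then have "K \<noteq> {}"
    using K max_chains_memI[of K X a] by blast
  then obtain x where "x \<in> K" by blast
  then have K_eq: "K = {x}"
    using no_pair max_chains_comparable[OF K] by (auto simp: order.order_iff_strict)
  have "y = x" if "y \<in> X" for y
  proof -
    have "(\<lambda>a b. a \<in> X \<and> b \<in> X \<and> (a \<le> b \<or> b \<le> a))\<^sup>*\<^sup>* x y"
      using conn that \<open>x \<in> K\<close> max_chains_subset[OF K] unfolding connected_poset_def by blast
    then show ?thesis
      by (induction rule: rtranclp_induct) (use max_chains_memI[OF K] K_eq in auto)
  qed
  then show False using ab by blast
qed

lemma trancl_linked_rel_max_chains: "(K, K') \<in> (linked_rel X)\<^sup>+ \<Longrightarrow> K \<in> max_chains X \<and> K' \<in> max_chains X"
  by (induction rule: trancl_induct) (auto simp: linked_rel_def)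

lemma sim_rel_subset: "sim_rel X \<subseteq> max_chains X \<times> max_chains X"
  unfolding sim_rel_def using trancl_linked_rel_max_chains by auto

lemma sim_rel_equiv: "equiv (max_chains X) (sim_rel X)"
proof (rule equivI)
  show "refl_on (max_chains X) (sim_rel X)"
    unfolding refl_on_def sim_rel_def using trancl_linked_rel_max_chains by blast
  have "sym (linked_rel X)" unfolding sym_def linked_rel_def by blast
  then show "sym (sim_rel X)"
    unfolding sim_rel_def by (intro sym_Un sym_Id_on sym_trancl)
  show "sim_rel X \<subseteq> max_chains X \<times> max_chains X" by (rule sim_rel_subset)
  show "trans (sim_rel X)"
    unfolding sim_rel_def trans_def by (auto intro: trancl_trans)
qed

lemma finite_max_chains: "finite X \<Longrightarrow> finite (max_chains X)"
  by (rule finite_subset[of _ "Pow X"]) (auto simp: max_chains_def)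

lemma basis_mono: "K \<subseteq> X \<Longrightarrow> basis K \<subseteq> basis X"
  unfolding basis_def by blast

lemma finite_basis: "finite S \<Longrightarrow> finite (basis S)"
  by (rule finite_subset[of _ "S \<times> S"]) (auto simp: basis_def)

section \<open>Maps that are increasing or decreasing on every maximal chain\<close>

definition orient :: "bool \<Rightarrow> 'a \<Rightarrow> 'a \<Rightarrow> 'a \<times> 'a" where
  "orient s x y = (if s then (x, y) else (y, x))"

definition chain_map ::
    "'a::order set \<Rightarrow> ('a \<times> 'a \<Rightarrow> 'a \<times> 'a) \<Rightarrow> bool \<Rightarrow> 'a set \<Rightarrow> 'a set \<Rightarrow> ('a \<Rightarrow> 'a) \<Rightarrow> bool" where
  "chain_map X \<phi> s K D f \<longleftrightarrow> D \<in> max_chains X \<and> bij_betw f K D \<and>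
     (\<forall>x\<in>K. \<forall>y\<in>K. x < y \<longrightarrow> \<phi> (x, y) = orient s (f x) (f y))"

lemma chain_map_cong:
  assumes "\<And>x. x \<in> K \<Longrightarrow> f x = g x"
  shows "chain_map X \<phi> s K D f \<longleftrightarrow> chain_map X \<phi> s K D g"
proof -
  have "bij_betw f K D \<longleftrightarrow> bij_betw g K D" using assms by (rule bij_betw_cong)
  then show ?thesis using assms unfolding chain_map_def by auto
qed

definition image_chain :: "('a::order \<times> 'a \<Rightarrow> 'a \<times> 'a) \<Rightarrow> 'a set \<Rightarrow> 'a set" where
  "image_chain \<phi> K = fst ` \<phi> ` basis K \<union> snd ` \<phi> ` basis K"

lemma chain_image_imp_chain_map:
  assumes "chain_image X \<phi> K D"
  shows "\<exists>s f. chain_map X \<phi> s K D f"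
  using assms unfolding chain_image_def
proof
  assume "incr_to X \<phi> K D"
  then show ?thesis
    unfolding incr_to_def chain_map_def orient_def by (intro exI[of _ True]) auto
next
  assume "decr_to X \<phi> K D"
  then show ?thesis
    unfolding decr_to_def chain_map_def orient_def by (intro exI[of _ False]) auto
qed

lemma chain_map_imp_chain_image:
  assumes "bij_betw \<phi> (basis X) (basis X)" "K \<in> max_chains X" "chain_map X \<phi> s K D f"
  shows "chain_image X \<phi> K D"
proof -
  have "\<phi> (x, y) \<in> basis X" if "x \<in> K" "y \<in> K" "x < y" for x y
  proof (rule bij_betw_apply[OF assms(1)])
    show "(x, y) \<in> basis X" using that max_chains_subset[OF assms(2)] by (auto simp: basis_def)
  qed
  then show ?thesis
    using assms(3) unfolding chain_image_def chain_map_def incr_to_def decr_to_def orient_def basis_def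
    by (cases s) auto
qed

lemma M_set_iff_chain_map:
  "\<phi> \<in> M_set X \<longleftrightarrow> bij_betw \<phi> (basis X) (basis X) \<and>
     (\<forall>K\<in>max_chains X. \<exists>s D f. chain_map X \<phi> s K D f)"
  unfolding M_set_def mem_Collect_eq
  using chain_image_imp_chain_map chain_map_imp_chain_image unfolding chain_image_def by meson

locale M_map =
  fixes X :: "'a::order set" and \<phi> :: "'a \<times> 'a \<Rightarrow> 'a \<times> 'a"
  assumes finite_X: "finite X" and in_M_set: "\<phi> \<in> M_set X"
    and max_chains_nontrivial: "K \<in> max_chains X \<Longrightarrow> \<exists>x\<in>K. \<exists>y\<in>K. x < y"
begin

lemma bij_betw_basis: "bij_betw \<phi> (basis X) (basis X)"
  using in_M_set unfolding M_set_def by blast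

lemma map_basis: "p \<in> basis X \<Longrightarrow> \<phi> p \<in> basis X"
  using bij_betw_basis unfolding bij_betw_def by blast

lemma map_inj: "p \<in> basis X \<Longrightarrow> q \<in> basis X \<Longrightarrow> \<phi> p = \<phi> q \<Longrightarrow> p = q"
  using bij_betw_basis unfolding bij_betw_def inj_on_def by blast

lemma map_less:
  assumes "x \<in> X" "y \<in> X" "x < y"
  shows "fst (\<phi> (x, y)) < snd (\<phi> (x, y))" "fst (\<phi> (x, y)) \<in> X" "snd (\<phi> (x, y)) \<in> X"
  using map_basis[of "(x, y)"] assms unfolding basis_def by auto

lemma exists_chain_map: "K \<in> max_chains X \<Longrightarrow> \<exists>s D f. chain_map X \<phi> s K D f"
  using in_M_set unfolding M_set_iff_chain_map by blast

lemma max_chain_through_map: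
  assumes "S \<subseteq> X" "is_chain S"
  obtains E s F g where "E \<in> max_chains X" "S \<subseteq> E" "chain_map X \<phi> s E F g"
  using finite_chain_extends_to_max_chain[OF finite_X assms] exists_chain_map by blast

context
  fixes s K D f
  assumes K: "K \<in> max_chains X" and f: "chain_map X \<phi> s K D f"
begin

lemma chain_map_target_max_chain: "D \<in> max_chains X"
  using f unfolding chain_map_def by blast

lemma chain_map_image: "f ` K = D"
  using f unfolding chain_map_def bij_betw_def by blast

lemma chain_map_pair_eq: "x \<in> K \<Longrightarrow> y \<in> K \<Longrightarrow> x < y \<Longrightarrow> \<phi> (x, y) = orient s (f x) (f y)"
  using f unfolding chain_map_def by blast

lemma chain_map_less:
  assumes "x \<in> K" "y \<in> K" "x < y"
  shows "if s then f x < f y else f y < f x"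
  using map_less(1)[of x y] chain_map_pair_eq[OF assms] assms max_chains_subset[OF K]
  unfolding orient_def by (cases s) auto

lemma chain_map_preimage:
  assumes "a \<in> K" "b \<in> K" "f a < f b"
  shows "orient s a b \<in> basis K" "\<phi> (orient s a b) = (f a, f b)"
proof -
  have "a < b \<or> b < a"
    using assms max_chains_comparable[OF K, of a b] by (auto simp: order.order_iff_strict)
  then have "orient s a b \<in> basis K \<and> \<phi> (orient s a b) = (f a, f b)"
    using chain_map_less[of a b] chain_map_less[of b a] chain_map_pair_eq assms
    unfolding orient_def basis_def by (cases s) auto
  then show "orient s a b \<in> basis K" "\<phi> (orient s a b) = (f a, f b)" by blast+
qed

lemma chain_map_basis: "\<phi> ` basis K = basis D"
proof
  show "\<phi> ` basis K \<subseteq> basis D"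
  proof
    fix e assume "e \<in> \<phi> ` basis K"
    then obtain x y where xy: "x \<in> K" "y \<in> K" "x < y" "e = \<phi> (x, y)"
      unfolding basis_def by blast
    then show "e \<in> basis D"
      using chain_map_less[OF xy(1-3)] chain_map_pair_eq[OF xy(1-3)] chain_map_image
      unfolding orient_def basis_def by (cases s) auto
  qed
  show "basis D \<subseteq> \<phi> ` basis K"
  proof
    fix e assume "e \<in> basis D"
    then obtain a b where "a \<in> K" "b \<in> K" "f a < f b" "e = (f a, f b)"
      using chain_map_image unfolding basis_def by blast
    then show "e \<in> \<phi> ` basis K" using chain_map_preimage by (metis image_eqI)
  qed
qed

end

lemma max_chains_basis_ends:
  assumes K: "K \<in> max_chains X"
  shows "K = fst ` basis K \<union> snd ` basis K"
proof
  show "K \<subseteq> fst ` basis K \<union> snd ` basis K"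
  proof
    fix k assume k: "k \<in> K"
    obtain a b where ab: "a \<in> K" "b \<in> K" "a < b" using max_chains_nontrivial[OF K] by blast
    then obtain k' where "k' \<in> K" "k' \<noteq> k" by blast
    then have "(k, k') \<in> basis K \<or> (k', k) \<in> basis K"
      using k max_chains_comparable[OF K] by (auto simp: basis_def order.order_iff_strict)
    then show "k \<in> fst ` basis K \<union> snd ` basis K" by force
  qed
qed (auto simp: basis_def)

lemma chain_map_target:
  "K \<in> max_chains X \<Longrightarrow> chain_map X \<phi> s K D f \<Longrightarrow> D = image_chain \<phi> K"
  using max_chains_basis_ends[OF chain_map_target_max_chain] chain_map_basis
  unfolding image_chain_def by simp

lemma image_chain_map:
  "K \<in> max_chains X \<Longrightarrow> \<exists>s f. chain_map X \<phi> s K (image_chain \<phi> K) f"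
  using exists_chain_map chain_map_target by blast

lemma image_chain_max_chains: "K \<in> max_chains X \<Longrightarrow> image_chain \<phi> K \<in> max_chains X"
  using image_chain_map chain_map_target_max_chain by blast

lemma image_chain_basis: "K \<in> max_chains X \<Longrightarrow> \<phi> ` basis K = basis (image_chain \<phi> K)"
  using image_chain_map chain_map_basis by blast

lemma image_chain_bij: "bij_betw (image_chain \<phi>) (max_chains X) (max_chains X)"
proof -
  have inj: "inj_on (image_chain \<phi>) (max_chains X)"
  proof (rule inj_onI)
    fix K K' assume K: "K \<in> max_chains X" "K' \<in> max_chains X"
      and eq: "image_chain \<phi> K = image_chain \<phi> K'"
    have "basis K \<subseteq> basis X" "basis K' \<subseteq> basis X"
      using K max_chains_subset basis_mono by blast+
    moreover have "\<phi> ` basis K = \<phi> ` basis K'"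
      using eq image_chain_basis[OF K(1)] image_chain_basis[OF K(2)] by simp
    moreover have "inj_on \<phi> (basis X)" using bij_betw_basis by (simp add: bij_betw_def)
    ultimately have "basis K = basis K'" by (simp add: inj_on_image_eq_iff)
    then show "K = K'" using max_chains_basis_ends[OF K(1)] max_chains_basis_ends[OF K(2)] by simp
  qed
  have "max_chains X \<subseteq> Pow X" unfolding max_chains_def by blast
  then have "finite (max_chains X)" by (rule finite_subset) (simp add: finite_X)
  moreover have "image_chain \<phi> ` max_chains X \<subseteq> max_chains X"
    using image_chain_max_chains by blast
  ultimately show ?thesis using endo_inj_surj[OF _ _ inj] inj unfolding bij_betw_def by blast
qed

lemma map_inverse: "p \<in> basis X \<Longrightarrow> inv_into (basis X) \<phi> (\<phi> p) = p"
  using bij_betw_basis by (simp add: bij_betw_def)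

lemma chain_map_inverse:
  assumes K: "K \<in> max_chains X" and f: "chain_map X \<phi> s K D f"
  shows "chain_map X (inv_into (basis X) \<phi>) s D K (inv_into K f)"
proof -
  have bij: "bij_betw f K D" using f by (simp add: chain_map_def)
  then have inj: "inj_on f K" by (simp add: bij_betw_def)
  have "inv_into (basis X) \<phi> (d, d') = orient s (inv_into K f d) (inv_into K f d')"
    if d: "d \<in> D" "d' \<in> D" "d < d'" for d d'
  proof -
    obtain a b where ab: "a \<in> K" "b \<in> K" "d = f a" "d' = f b"
      using chain_map_image[OF K f] d(1,2) by blast
    then have "f a < f b" using d(3) by simp
    then have "orient s a b \<in> basis X" "\<phi> (orient s a b) = (d, d')"
      using chain_map_preimage[OF K f ab(1,2)] ab(3,4) basis_mono[OF max_chains_subset[OF K]] by auto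
    then have "inv_into (basis X) \<phi> (d, d') = orient s a b"
      using map_inverse by metis
    then show ?thesis
      using ab by (simp add: inv_into_f_f[OF inj])
  qed
  then show ?thesis
    using K bij_betw_inv_into[OF bij] unfolding chain_map_def by blast
qed

lemma M_map_inverse: "M_map X (inv_into (basis X) \<phi>)"
proof -
  have "\<exists>s K g. chain_map X (inv_into (basis X) \<phi>) s D K g" if "D \<in> max_chains X" for D
  proof -
    have "D \<in> image_chain \<phi> ` max_chains X"
      using image_chain_bij that by (simp add: bij_betw_def)
    then obtain K where K: "K \<in> max_chains X" "D = image_chain \<phi> K" by blast
    then obtain s f where "chain_map X \<phi> s K D f" using image_chain_map by blast
    then show ?thesis using chain_map_inverse[OF K(1)] by blast
  qed
  moreover have "bij_betw (inv_into (basis X) \<phi>) (basis X) (basis X)"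
    by (rule bij_betw_inv_into[OF bij_betw_basis])
  ultimately have "inv_into (basis X) \<phi> \<in> M_set X"
    by (simp add: M_set_iff_chain_map)
  then show ?thesis
    using finite_X max_chains_nontrivial by (simp add: M_map_def)
qed

section \<open>Orientation at interior points and linked chains\<close>

text \<open>The images of \<open>e\<^sub>p\<^sub>x\<close> and \<open>e\<^sub>x\<^sub>q\<close> multiply to a nonzero element
  in this order (\<open>incr_at\<close>) or in the reverse order (\<open>decr_at\<close>).\<close>

definition incr_at :: "'a \<Rightarrow> 'a \<Rightarrow> 'a \<Rightarrow> bool" where
  "incr_at p x q \<longleftrightarrow> snd (\<phi> (p, x)) = fst (\<phi> (x, q))"

definition decr_at :: "'a \<Rightarrow> 'a \<Rightarrow> 'a \<Rightarrow> bool" where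
  "decr_at p x q \<longleftrightarrow> snd (\<phi> (x, q)) = fst (\<phi> (p, x))"

definition oriented_at :: "bool \<Rightarrow> 'a \<Rightarrow> 'a \<Rightarrow> 'a \<Rightarrow> bool" where
  "oriented_at s p x q \<longleftrightarrow> (if s then incr_at p x q else decr_at p x q)"

lemma chain_through_triple:
  assumes "p \<in> X" "x \<in> X" "q \<in> X" "p < x" "x < q"
  obtains E s F g where "E \<in> max_chains X" "p \<in> E" "x \<in> E" "q \<in> E" "chain_map X \<phi> s E F g"
proof -
  have "is_chain {p, x, q}"
    using assms unfolding is_chain_def by (auto dest: order.strict_trans less_imp_le)
  moreover have "{p, x, q} \<subseteq> X" using assms by simp
  ultimately show ?thesis
    using max_chain_through_map that by (metis insert_subset)
qed

lemma chain_map_oriented_at: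
  assumes "chain_map X \<phi> s K D f" "p \<in> K" "x \<in> K" "q \<in> K" "p < x" "x < q"
  shows "oriented_at s p x q"
  using assms unfolding chain_map_def oriented_at_def incr_at_def decr_at_def orient_def
  by (cases s) auto

lemma incr_or_decr_at:
  assumes "p \<in> X" "x \<in> X" "q \<in> X" "p < x" "x < q"
  shows "incr_at p x q \<or> decr_at p x q"
proof -
  obtain E s F g where "p \<in> E" "x \<in> E" "q \<in> E" "chain_map X \<phi> s E F g"
    using chain_through_triple[OF assms] .
  then have "oriented_at s p x q"
    using chain_map_oriented_at assms(4,5) by blast
  then show ?thesis unfolding oriented_at_def by (cases s) simp_all
qed

lemma exists_oriented_at:
  "p \<in> X \<Longrightarrow> x \<in> X \<Longrightarrow> q \<in> X \<Longrightarrow> p < x \<Longrightarrow> x < q \<Longrightarrow> \<exists>s. oriented_at s p x q"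
  unfolding oriented_at_def using incr_or_decr_at by (metis (full_types))

lemma not_incr_and_decr_at:
  assumes "p \<in> X" "x \<in> X" "q \<in> X" "p < x" "x < q" "incr_at p x q" "decr_at p x q"
  shows False
  using map_less(1)[of p x] map_less(1)[of x q] assms unfolding incr_at_def decr_at_def by auto

lemma incr_decr_at_cycle:
  assumes X: "p \<in> X" "p' \<in> X" "x \<in> X" "q \<in> X" "q' \<in> X"
    and less: "p < x" "p' < x" "x < q" "x < q'"
    and "incr_at p x q" "decr_at p' x q" "incr_at p' x q'" "decr_at p x q'"
  shows False
proof -
  have "fst (\<phi> (p, x)) < snd (\<phi> (p, x))" using map_less X less by blast
  also have "\<dots> = fst (\<phi> (x, q))" using \<open>incr_at p x q\<close> by (simp add: incr_at_def)
  also have "\<dots> < snd (\<phi> (x, q))" using map_less X less by blast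
  also have "\<dots> = fst (\<phi> (p', x))" using \<open>decr_at p' x q\<close> by (simp add: decr_at_def)
  also have "\<dots> < snd (\<phi> (p', x))" using map_less X less by blast
  also have "\<dots> = fst (\<phi> (x, q'))" using \<open>incr_at p' x q'\<close> by (simp add: incr_at_def)
  also have "\<dots> < snd (\<phi> (x, q'))" using map_less X less by blast
  also have "\<dots> = fst (\<phi> (p, x))" using \<open>decr_at p x q'\<close> by (simp add: decr_at_def)
  finally show False by simp
qed

lemma incr_decr_at_distinct:
  assumes X: "p \<in> X" "p' \<in> X" "x \<in> X" "q \<in> X" "q' \<in> X"
    and less: "p < x" "p' < x" "x < q" "x < q'" and "p \<noteq> p'" "q \<noteq> q'"
    and I: "incr_at p x q" and D: "decr_at p' x q'"
  shows False
proof -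
  have lt: "fst (\<phi> (p, x)) < snd (\<phi> (p, x))" "fst (\<phi> (p', x)) < snd (\<phi> (p', x))"
    "fst (\<phi> (x, q)) < snd (\<phi> (x, q))" "fst (\<phi> (x, q')) < snd (\<phi> (x, q'))"
    using map_less X less by blast+
  have inj: "\<phi> (x, q) \<noteq> \<phi> (x, q')" "\<phi> (p, x) \<noteq> \<phi> (p', x)"
    using map_inj[of "(x, q)" "(x, q')"] map_inj[of "(p, x)" "(p', x)"] X less assms(10,11)
    by (auto simp: basis_def)
  from incr_or_decr_at[of p x q'] incr_or_decr_at[of p' x q] X less
  consider "incr_at p x q'" "incr_at p' x q" | "incr_at p x q'" "decr_at p' x q"
    | "decr_at p x q'" "incr_at p' x q" | "decr_at p x q'" "decr_at p' x q" by blast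
  then show False
    using I D lt inj unfolding incr_at_def decr_at_def by cases (auto simp: prod_eq_iff)
qed

lemma incr_decr_at_unique_lower:
  assumes X: "p \<in> X" "x \<in> X" "q \<in> X" "q' \<in> X" and less: "p < x" "x < q" "x < q'"
    and I: "incr_at p x q" and D: "decr_at p x q'" and only: "\<And>y. y \<in> X \<Longrightarrow> y < x \<Longrightarrow> y = p"
  shows False
proof -
  obtain E s F g where E: "E \<in> max_chains X" "p \<in> E" "x \<in> E" "q \<in> E"
    and g: "chain_map X \<phi> s E F g"
    using chain_through_triple[OF X(1-3) less(1,2)] by blast
  have s using chain_map_oriented_at[OF g E(2-4) less(1,2)] not_incr_and_decr_at[OF X(1-3) less(1,2) I]
    unfolding oriented_at_def by (cases s) auto
  have "g p = fst (\<phi> (p, x))"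
    using chain_map_pair_eq[OF E(1) g E(2,3) less(1)] \<open>s\<close> by (simp add: orient_def)
  have "p \<le> y" if "y \<in> E" for y
    using max_chains_comparable[OF E(1) that E(3)] only[of y] max_chains_subset[OF E(1)] that less(1)
    by (auto simp: order.order_iff_strict)
  then have "g p \<le> k" if "k \<in> F" for k
    using that chain_map_image[OF E(1) g] chain_map_less[OF E(1) g E(2)] \<open>s\<close>
    by (auto simp: order.order_iff_strict)
  moreover have "fst (\<phi> (x, q')) < fst (\<phi> (p, x))"
    using map_less(1)[OF X(2,4) less(3)] D by (simp add: decr_at_def)
  ultimately show False
    using max_chains_no_strict_lower_bound[OF chain_map_target_max_chain[OF E(1) g]]
      map_less(2)[OF X(2,4) less(3)] \<open>g p = fst (\<phi> (p, x))\<close> by (metis order.strict_trans2)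
qed

lemma incr_decr_at_unique_upper:
  assumes X: "p \<in> X" "p' \<in> X" "x \<in> X" "q \<in> X" and less: "p < x" "p' < x" "x < q"
    and I: "incr_at p x q" and D: "decr_at p' x q" and only: "\<And>y. y \<in> X \<Longrightarrow> x < y \<Longrightarrow> y = q"
  shows False
proof -
  obtain E s F g where E: "E \<in> max_chains X" "p \<in> E" "x \<in> E" "q \<in> E"
    and g: "chain_map X \<phi> s E F g"
    using chain_through_triple[OF X(1,3,4) less(1,3)] by blast
  have s using chain_map_oriented_at[OF g E(2-4) less(1,3)] not_incr_and_decr_at[OF X(1,3,4) less(1,3) I]
    unfolding oriented_at_def by (cases s) auto
  have "g q = snd (\<phi> (x, q))"
    using chain_map_pair_eq[OF E(1) g E(3,4) less(3)] \<open>s\<close> by (simp add: orient_def)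
  have "y \<le> q" if "y \<in> E" for y
    using max_chains_comparable[OF E(1) that E(3)] only[of y] max_chains_subset[OF E(1)] that less(3)
    by (auto simp: order.order_iff_strict)
  then have "k \<le> g q" if "k \<in> F" for k
    using that chain_map_image[OF E(1) g] chain_map_less[OF E(1) g _ E(4)] \<open>s\<close>
    by (auto simp: order.order_iff_strict)
  moreover have "snd (\<phi> (x, q)) < snd (\<phi> (p', x))"
    using map_less(1)[OF X(2,3) less(2)] D by (simp add: decr_at_def)
  ultimately show False
    using max_chains_no_strict_upper_bound[OF chain_map_target_max_chain[OF E(1) g]]
      map_less(3)[OF X(2,3) less(2)] \<open>g q = snd (\<phi> (x, q))\<close> by (metis order.strict_trans1)
qed

lemma incr_decr_at_same_lower:
  assumes X: "p \<in> X" "x \<in> X" "q \<in> X" "q' \<in> X" and less: "p < x" "x < q" "x < q'"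
    and "q \<noteq> q'" and I: "incr_at p x q" and D: "decr_at p x q'"
  shows False
proof (cases "\<exists>p'\<in>X. p' < x \<and> p' \<noteq> p")
  case True
  then obtain p' where p': "p' \<in> X" "p' < x" "p \<noteq> p'" by blast
  have "\<not> decr_at p' x q'"
    using incr_decr_at_distinct[OF X(1) p'(1) X(2-4) less(1) p'(2) less(2,3) p'(3) \<open>q \<noteq> q'\<close> I] by blast
  then have "incr_at p' x q'" using incr_or_decr_at[OF p'(1) X(2,4) p'(2) less(3)] by blast
  moreover have "\<not> incr_at p' x q"
    using incr_decr_at_distinct[OF p'(1) X p'(2) less p'(3)[symmetric] \<open>q \<noteq> q'\<close>] D by blast
  then have "decr_at p' x q" using incr_or_decr_at[OF p'(1) X(2,3) p'(2) less(2)] by blast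
  ultimately show False
    using incr_decr_at_cycle[OF X(1) p'(1) X(2-4) less(1) p'(2) less(2,3) I] D by blast
next
  case False
  then show False using incr_decr_at_unique_lower[OF X less I D] by blast
qed

lemma incr_decr_at_same_upper:
  assumes X: "p \<in> X" "p' \<in> X" "x \<in> X" "q \<in> X" and less: "p < x" "p' < x" "x < q"
    and "p \<noteq> p'" and I: "incr_at p x q" and D: "decr_at p' x q"
  shows False
proof (cases "\<exists>q'\<in>X. x < q' \<and> q' \<noteq> q")
  case True
  then obtain q' where q': "q' \<in> X" "x < q'" "q \<noteq> q'" by blast
  have "\<not> incr_at p x q'"
    using incr_decr_at_distinct[OF X(1-3) q'(1) X(4) less(1,2) q'(2) less(3) \<open>p \<noteq> p'\<close> q'(3)[symmetric]] D
    by blast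
  then have "decr_at p x q'" using incr_or_decr_at[OF X(1,3) q'(1) less(1) q'(2)] by blast
  moreover have "\<not> decr_at p' x q'"
    using incr_decr_at_distinct[OF X q'(1) less q'(2) \<open>p \<noteq> p'\<close> q'(3) I] by blast
  then have "incr_at p' x q'" using incr_or_decr_at[OF X(2,3) q'(1) less(2) q'(2)] by blast
  ultimately show False
    using incr_decr_at_cycle[OF X q'(1) less q'(2) I D] by blast
next
  case False
  then show False using incr_decr_at_unique_upper[OF X less I D] by blast
qed

lemma incr_at_imp_not_decr_at:
  assumes X: "p \<in> X" "p' \<in> X" "x \<in> X" "q \<in> X" "q' \<in> X"
    and less: "p < x" "p' < x" "x < q" "x < q'" and I: "incr_at p x q"
  shows "\<not> decr_at p' x q'"
proof
  assume D: "decr_at p' x q'"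
  consider "p \<noteq> p'" "q \<noteq> q'" | "p = p'" "q = q'" | "p = p'" "q \<noteq> q'" | "p \<noteq> p'" "q = q'"
    by blast
  then show False
  proof cases
    case 1
    then show False using incr_decr_at_distinct[OF X less _ _ I D] by blast
  next
    case 2
    then show False using not_incr_and_decr_at[OF X(1,3,4) less(1,3) I] D by simp
  next
    case 3
    then show False using incr_decr_at_same_lower[OF X(1,3-5) less(1,3,4) _ I] D by simp
  next
    case 4
    then show False using incr_decr_at_same_upper[OF X(1-4) less(1-3) _ I] D by simp
  qed
qed

lemma oriented_at_unique:
  assumes "p \<in> X" "p' \<in> X" "x \<in> X" "q \<in> X" "q' \<in> X" "p < x" "p' < x" "x < q" "x < q'"
    and "oriented_at s p x q" "oriented_at s' p' x q'"
  shows "s' = s"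
proof (cases s; cases s')
  assume "s" "\<not> s'"
  then show ?thesis
    using assms incr_at_imp_not_decr_at[of p p' x q q'] unfolding oriented_at_def by simp
next
  assume "\<not> s" "s'"
  then show ?thesis
    using assms incr_at_imp_not_decr_at[of p' p x q' q] unfolding oriented_at_def by simp
qed simp_all

lemma chain_maps_agree_at_interior:
  assumes K: "K \<in> max_chains X" "K' \<in> max_chains X" and x: "x \<in> K" "x \<in> K'"
    and inner: "x \<notin> minimal_elems X" "x \<notin> maximal_elems X"
    and f: "chain_map X \<phi> s K D f" and f': "chain_map X \<phi> s' K' D' f'"
  shows "s' = s" "f' x = f x"
proof -
  obtain a b where ab: "a \<in> K" "b \<in> K" "a < x" "x < b"
    using max_chains_below[OF K(1) x(1) inner(1)] max_chains_above[OF K(1) x(1) inner(2)] by blast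
  obtain a' b' where ab': "a' \<in> K'" "b' \<in> K'" "a' < x" "x < b'"
    using max_chains_below[OF K(2) x(2) inner(1)] max_chains_above[OF K(2) x(2) inner(2)] by blast
  have X: "a \<in> X" "b \<in> X" "a' \<in> X" "b' \<in> X" "x \<in> X"
    using ab ab' x max_chains_subset K by blast+
  have o: "oriented_at s a x b" "oriented_at s' a' x b'"
    using chain_map_oriented_at[OF f ab(1) x(1) ab(2)] chain_map_oriented_at[OF f' ab'(1) x(2) ab'(2)]
      ab ab' by blast+
  show "s' = s" by (rule oriented_at_unique[OF X(1,3,5,2,4) ab(3) ab'(3) ab(4) ab'(4) o])
  obtain t where t: "oriented_at t a x b'" using exists_oriented_at[OF X(1,5,4) ab(3) ab'(4)] ..
  have "t = s" by (rule oriented_at_unique[OF X(1,1,5,2,4) ab(3) ab(3) ab(4) ab'(4) o(1) t])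
  moreover have "\<phi> (a, x) = orient s (f a) (f x)" "\<phi> (x, b') = orient s' (f' x) (f' b')"
    using chain_map_pair_eq[OF K(1) f ab(1) x(1) ab(3)] chain_map_pair_eq[OF K(2) f' x(2) ab'(2) ab'(4)]
    by blast+
  ultimately show "f' x = f x"
    using t \<open>s' = s\<close> unfolding oriented_at_def incr_at_def decr_at_def orient_def by (cases s) auto
qed

lemma chain_map_interior:
  assumes K: "K \<in> max_chains X" and f: "chain_map X \<phi> s K D f" and "x \<in> K"
    and inner: "x \<notin> minimal_elems X" "x \<notin> maximal_elems X"
  shows "f x \<notin> minimal_elems X \<and> f x \<notin> maximal_elems X"
proof -
  obtain a b where ab: "a \<in> K" "b \<in> K" "a < x" "x < b"
    using max_chains_below[OF K \<open>x \<in> K\<close> inner(1)] max_chains_above[OF K \<open>x \<in> K\<close> inner(2)] by blast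
  have "f a \<in> X" "f b \<in> X"
    using ab chain_map_image[OF K f] max_chains_subset[OF chain_map_target_max_chain[OF K f]] by blast+
  moreover have "if s then f a < f x \<and> f x < f b else f x < f a \<and> f b < f x"
    using chain_map_less[OF K f ab(1) \<open>x \<in> K\<close> ab(3)] chain_map_less[OF K f \<open>x \<in> K\<close> ab(2,4)]
    by (cases s) simp_all
  ultimately show ?thesis
    unfolding minimal_elems_def maximal_elems_def by (cases s) auto
qed

lemma chain_map_linked:
  assumes K: "K \<in> max_chains X" "K' \<in> max_chains X"
    and f: "chain_map X \<phi> s K D f" and f': "chain_map X \<phi> s' K' D' f'"
    and "(K, K') \<in> linked_rel X"
  shows "(D, D') \<in> linked_rel X"
proof -
  obtain x where x: "x \<in> K" "x \<in> K'" "x \<notin> minimal_elems X" "x \<notin> maximal_elems X"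
    using assms(5) unfolding linked_rel_def by blast
  have "f x \<in> D" "f' x \<in> D'"
    using x chain_map_image[OF K(1) f] chain_map_image[OF K(2) f'] by blast+
  moreover have "f' x = f x" by (rule chain_maps_agree_at_interior[OF K x f f'])
  ultimately show ?thesis
    using chain_map_interior[OF K(1) f x(1,3,4)]
      chain_map_target_max_chain[OF K(1) f] chain_map_target_max_chain[OF K(2) f']
    unfolding linked_rel_def by auto
qed

lemma image_chain_linked:
  assumes "(K, K') \<in> linked_rel X"
  shows "(image_chain \<phi> K, image_chain \<phi> K') \<in> linked_rel X"
proof -
  have K: "K \<in> max_chains X" "K' \<in> max_chains X" using assms unfolding linked_rel_def by blast+
  obtain s f where "chain_map X \<phi> s K (image_chain \<phi> K) f" using image_chain_map[OF K(1)] by blast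
  moreover obtain s' f' where "chain_map X \<phi> s' K' (image_chain \<phi> K') f'"
    using image_chain_map[OF K(2)] by blast
  ultimately show ?thesis using chain_map_linked[OF K _ _ assms] by blast
qed

lemma image_chain_sim:
  assumes "(K, K') \<in> sim_rel X"
  shows "(image_chain \<phi> K, image_chain \<phi> K') \<in> sim_rel X"
proof -
  have "(image_chain \<phi> K, image_chain \<phi> K') \<in> (linked_rel X)\<^sup>+" if "(K, K') \<in> (linked_rel X)\<^sup>+"
    using that by (induction rule: trancl_induct) (auto intro: image_chain_linked trancl_into_trancl)
  then show ?thesis
    using assms image_chain_max_chains unfolding sim_rel_def by auto
qed

lemma image_chain_inverse:
  assumes K: "K \<in> max_chains X"
  shows "image_chain (inv_into (basis X) \<phi>) (image_chain \<phi> K) = K"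
proof -
  interpret inv: M_map X "inv_into (basis X) \<phi>" by (rule M_map_inverse)
  obtain s f where "chain_map X \<phi> s K (image_chain \<phi> K) f" using image_chain_map[OF K] by blast
  then show ?thesis
    using inv.chain_map_target[OF image_chain_max_chains[OF K]] chain_map_inverse[OF K] by metis
qed

lemma image_chain_class:
  assumes K: "K \<in> max_chains X"
  shows "image_chain \<phi> ` (sim_rel X `` {K}) = sim_rel X `` {image_chain \<phi> K}"
proof
  show "image_chain \<phi> ` (sim_rel X `` {K}) \<subseteq> sim_rel X `` {image_chain \<phi> K}"
    using image_chain_sim by blast
  show "sim_rel X `` {image_chain \<phi> K} \<subseteq> image_chain \<phi> ` (sim_rel X `` {K})"
  proof
    interpret inv: M_map X "inv_into (basis X) \<phi>" by (rule M_map_inverse)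
    fix D assume "D \<in> sim_rel X `` {image_chain \<phi> K}"
    then have sim: "(image_chain \<phi> K, D) \<in> sim_rel X" by blast
    then have "D \<in> image_chain \<phi> ` max_chains X"
      using sim_rel_subset image_chain_bij unfolding bij_betw_def by blast
    then obtain K' where K': "K' \<in> max_chains X" "D = image_chain \<phi> K'" by blast
    have "(K, K') \<in> sim_rel X"
      using inv.image_chain_sim[OF sim] image_chain_inverse K K' by simp
    then show "D \<in> image_chain \<phi> ` (sim_rel X `` {K})" using K' by blast
  qed
qed

lemma image_chain_classes_bij:
  "bij_betw ((`) (image_chain \<phi>)) (max_chains X // sim_rel X) (max_chains X // sim_rel X)"
proof -
  have classes: "\<CC> \<subseteq> max_chains X" if "\<CC> \<in> max_chains X // sim_rel X" for \<CC>
    using that sim_rel_subset unfolding quotient_def by blast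
  have "finite (max_chains X // sim_rel X)"
    using finite_quotient[OF finite_max_chains[OF finite_X] sim_rel_subset] .
  moreover have "(`) (image_chain \<phi>) ` (max_chains X // sim_rel X) \<subseteq> max_chains X // sim_rel X"
  proof
    fix \<DD> assume "\<DD> \<in> (`) (image_chain \<phi>) ` (max_chains X // sim_rel X)"
    then obtain K where K: "K \<in> max_chains X" "\<DD> = image_chain \<phi> ` (sim_rel X `` {K})"
      by (auto elim: quotientE)
    then have "\<DD> = sim_rel X `` {image_chain \<phi> K}" using image_chain_class by blast
    then show "\<DD> \<in> max_chains X // sim_rel X"
      using quotientI[OF image_chain_max_chains[OF K(1)]] by simp
  qed
  moreover have "inj_on ((`) (image_chain \<phi>)) (max_chains X // sim_rel X)"
  proof (rule inj_onI)
    fix \<CC> \<CC>' assume "\<CC> \<in> max_chains X // sim_rel X" "\<CC>' \<in> max_chains X // sim_rel X"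
      and "image_chain \<phi> ` \<CC> = image_chain \<phi> ` \<CC>'"
    then show "\<CC> = \<CC>'"
      using classes inj_on_image_eq_iff[OF bij_betw_imp_inj_on[OF image_chain_bij]] by metis
  qed
  ultimately show ?thesis using endo_inj_surj[of "max_chains X // sim_rel X"] unfolding bij_betw_def by blast
qed

end

section \<open>Walks and the potential of an admissible map\<close>

lemma sum_fun_apply: "(\<Sum>i\<in>A. f i) z = (\<Sum>i\<in>A. f i z)"
  by (induction A rule: infinite_finite_induct) auto

lemma card_eq_sum_of_bool: "int (card {i. i < m \<and> P i}) = (\<Sum>i<m. of_bool (P i))" for m :: nat
proof -
  have "(\<Sum>i<m. of_bool (P i)) = int (card ({..<m} \<inter> {i. P i}))"
    by (rule sum_of_bool_eq) simp_all
  moreover have "{i. i < m \<and> P i} = {..<m} \<inter> {i. P i}" by auto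
  ultimately show ?thesis by simp
qed

definition delta :: "'a \<Rightarrow> 'a \<Rightarrow> int" where
  "delta p = (\<lambda>z. of_bool (z = p))"

definition boundary :: "'a \<times> 'a \<Rightarrow> 'a \<Rightarrow> int" where
  "boundary e = delta (fst e) - delta (snd e)"

definition signed_delta :: "bool \<Rightarrow> 'a \<Rightarrow> 'a \<Rightarrow> int" where
  "signed_delta s p = (if s then delta p else - delta p)"

lemma boundary_orient: "boundary (orient s x y) = signed_delta s x - signed_delta s y"
  by (cases s) (auto simp: boundary_def signed_delta_def orient_def)

lemma signed_delta_inj: "signed_delta s p = signed_delta s q \<Longrightarrow> p = q"
  unfolding signed_delta_def delta_def by (cases s) (auto dest: fun_cong[of _ _ p])

lemma boundary_inj:
  assumes "fst e \<noteq> snd e" "boundary e = boundary e'"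
  shows "e = e'"
proof -
  have "\<forall>z. of_bool (z = fst e) - of_bool (z = snd e) =
      (of_bool (z = fst e') - of_bool (z = snd e') :: int)"
    using assms(2) by (simp add: boundary_def delta_def fun_eq_iff)
  from spec[OF this, of "fst e"] spec[OF this, of "snd e"] assms(1) show ?thesis
    by (cases e; cases e') (auto simp: of_bool_def split: if_splits)
qed

definition adjacent :: "'a::order set \<Rightarrow> 'a \<Rightarrow> 'a \<Rightarrow> bool" where
  "adjacent X a b \<longleftrightarrow> covers X a b \<or> covers X b a"

definition walk :: "'a::order set \<Rightarrow> nat \<Rightarrow> (nat \<Rightarrow> 'a) \<Rightarrow> bool" where
  "walk X m u \<longleftrightarrow> (\<forall>i\<le>m. u i \<in> X) \<and> (\<forall>i<m. adjacent X (u i) (u (Suc i)))"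

definition walk_append :: "nat \<Rightarrow> (nat \<Rightarrow> 'a) \<Rightarrow> (nat \<Rightarrow> 'a) \<Rightarrow> nat \<Rightarrow> 'a" where
  "walk_append m u v = (\<lambda>i. if i \<le> m then u i else v (i - m))"

lemma closed_walk_iff: "closed_walk X m u \<longleftrightarrow> walk X m u \<and> u m = u 0"
  unfolding closed_walk_def walk_def adjacent_def by blast

lemma walk_append:
  assumes "walk X m u" "walk X n v" "u m = v 0"
  shows "walk X (m + n) (walk_append m u v)"
  unfolding walk_def
proof (intro conjI allI impI)
  fix i assume "i \<le> m + n"
  then show "walk_append m u v i \<in> X"
    using assms unfolding walk_def walk_append_def by auto
next
  fix i assume i: "i < m + n"
  show "adjacent X (walk_append m u v i) (walk_append m u v (Suc i))"
  proof (cases "i < m")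
    case True
    then show ?thesis using assms(1) unfolding walk_def walk_append_def by auto
  next
    case False
    then have "walk_append m u v i = v (i - m)" "walk_append m u v (Suc i) = v (Suc (i - m))"
      using assms(3) unfolding walk_append_def by (auto simp: Suc_diff_le)
    then show ?thesis using assms(2) i False unfolding walk_def by auto
  qed
qed

lemma walk_reverse:
  assumes "walk X m u"
  shows "walk X m (\<lambda>i. u (m - i))"
  unfolding walk_def
proof (intro conjI allI impI)
  fix i assume "i \<le> m" then show "u (m - i) \<in> X" using assms unfolding walk_def by auto
next
  fix i assume i: "i < m"
  then have "m - i = Suc (m - Suc i)" "m - Suc i < m" by auto
  then show "adjacent X (u (m - i)) (u (m - Suc i))"
    using assms unfolding walk_def adjacent_def by metis
qed

lemma walk_exists:
  assumes "finite X" "connected_poset X" "a \<in> X" "b \<in> X"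
  shows "\<exists>m u. walk X m u \<and> u 0 = a \<and> u m = b"
proof -
  have adj_sym: "(adjacent X)\<inverse>\<inverse> = adjacent X" unfolding adjacent_def by (auto simp: fun_eq_iff)
  have "(adjacent X)\<^sup>*\<^sup>* x y" if "x \<in> X" "y \<in> X" "x \<le> y" for x y
    using rtranclp_covers_if_le[OF assms(1) that] by (rule rtranclp_mono[THEN predicate2D, rotated])
      (auto simp: adjacent_def)
  then have comparable: "(adjacent X)\<^sup>*\<^sup>* x y" if "x \<in> X" "y \<in> X" "x \<le> y \<or> y \<le> x" for x y
    using that rtranclp_converseI[of "adjacent X" y x] adj_sym by auto
  have "(\<lambda>a b. a \<in> X \<and> b \<in> X \<and> (a \<le> b \<or> b \<le> a))\<^sup>*\<^sup>* a b"
    using assms unfolding connected_poset_def by blast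
  then have "(adjacent X)\<^sup>*\<^sup>* a b"
    by (induction rule: rtranclp_induct) (auto intro: rtranclp_trans comparable)
  then obtain n u where u: "u 0 = a" "u n = b" "\<forall>i<n. adjacent X (u i) (u (Suc i))"
    unfolding rtranclp_power relpowp_fun_conv by blast
  have "u i \<in> X" if "i \<le> n" for i
  proof (cases i)
    case (Suc j)
    then show ?thesis using u(3)[rule_format, of j] that unfolding adjacent_def covers_def by auto
  qed (use u(1) assms(3) in simp)
  then show ?thesis using u unfolding walk_def by blast
qed

locale admissible_map =
  fixes X :: "'a::order set" and \<theta> :: "'a \<times> 'a \<Rightarrow> 'a \<times> 'a"
  assumes finite_poset: "finite X" and connected: "connected_poset X"
    and nontrivial: "\<exists>a\<in>X. \<exists>b\<in>X. a \<noteq> b" and in_AM_set: "\<theta> \<in> AM_set X"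
begin

sublocale M_map X \<theta>
  using finite_poset in_AM_set max_chains_pair[OF connected nontrivial]
  unfolding M_map_def AM_set_def by blast

abbreviation \<psi> :: "'a \<times> 'a \<Rightarrow> 'a \<times> 'a" where
  "\<psi> \<equiv> inv_into (basis X) \<theta>"

sublocale inv: M_map X \<psi>
  by (rule M_map_inverse)

lemma map_inv_into: "p \<in> basis X \<Longrightarrow> \<theta> (\<psi> p) = p"
  using bij_betw_basis by (simp add: bij_betw_def f_inv_into_f)

lemma exists_preimage_iff:
  assumes "e \<in> basis X" "z \<in> X"
  shows "(\<exists>w\<in>X. z < w \<and> \<theta> (z, w) = e) \<longleftrightarrow> fst (\<psi> e) = z"
    and "(\<exists>w\<in>X. w < z \<and> \<theta> (w, z) = e) \<longleftrightarrow> snd (\<psi> e) = z"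
proof -
  have \<psi>e: "\<psi> e \<in> basis X" "\<theta> (\<psi> e) = e" using inv.map_basis[OF assms(1)] map_inv_into[OF assms(1)] .
  have eq: "\<theta> p = e \<longleftrightarrow> p = \<psi> e" if "p \<in> basis X" for p
    using map_inverse[OF that] \<psi>e(2) by auto
  show "(\<exists>w\<in>X. z < w \<and> \<theta> (z, w) = e) \<longleftrightarrow> fst (\<psi> e) = z"
  proof
    assume "\<exists>w\<in>X. z < w \<and> \<theta> (z, w) = e"
    then obtain w where "w \<in> X" "z < w" "\<theta> (z, w) = e" by blast
    then have "\<psi> e = (z, w)" using eq[of "(z, w)"] assms(2) by (simp add: basis_def)
    then show "fst (\<psi> e) = z" by simp
  next
    assume "fst (\<psi> e) = z"
    then show "\<exists>w\<in>X. z < w \<and> \<theta> (z, w) = e"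
      using \<psi>e by (intro bexI[of _ "snd (\<psi> e)"]) (auto simp: basis_def)
  qed
  show "(\<exists>w\<in>X. w < z \<and> \<theta> (w, z) = e) \<longleftrightarrow> snd (\<psi> e) = z"
  proof
    assume "\<exists>w\<in>X. w < z \<and> \<theta> (w, z) = e"
    then obtain w where "w \<in> X" "w < z" "\<theta> (w, z) = e" by blast
    then have "\<psi> e = (w, z)" using eq[of "(w, z)"] assms(2) by (simp add: basis_def)
    then show "snd (\<psi> e) = z" by simp
  next
    assume "snd (\<psi> e) = z"
    then show "\<exists>w\<in>X. w < z \<and> \<theta> (w, z) = e"
      using \<psi>e by (intro bexI[of _ "fst (\<psi> e)"]) (auto simp: basis_def)
  qed
qed

definition step_flow :: "'a \<Rightarrow> 'a \<Rightarrow> 'a \<Rightarrow> int" where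
  "step_flow a b = (if a < b then boundary (\<psi> (a, b)) else if b < a then - boundary (\<psi> (b, a)) else 0)"

definition walk_flow :: "nat \<Rightarrow> (nat \<Rightarrow> 'a) \<Rightarrow> 'a \<Rightarrow> int" where
  "walk_flow m u = (\<Sum>i<m. step_flow (u i) (u (Suc i)))"

lemma step_flow_swap: "step_flow b a = - step_flow a b"
  unfolding step_flow_def by auto

lemma step_flow_eq:
  assumes "a \<in> X" "b \<in> X" "z \<in> X"
  shows "step_flow a b z =
      of_bool (a < b \<and> (\<exists>w\<in>X. z < w \<and> \<theta> (z, w) = (a, b)))
    - of_bool (b < a \<and> (\<exists>w\<in>X. z < w \<and> \<theta> (z, w) = (b, a)))
    - of_bool (a < b \<and> (\<exists>w\<in>X. w < z \<and> \<theta> (w, z) = (a, b)))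
    + of_bool (b < a \<and> (\<exists>w\<in>X. w < z \<and> \<theta> (w, z) = (b, a)))"
proof -
  have "(a, b) \<in> basis X" if "a < b" using that assms by (simp add: basis_def)
  moreover have "(b, a) \<in> basis X" if "b < a" using that assms by (simp add: basis_def)
  ultimately show ?thesis
    using exists_preimage_iff[OF _ assms(3)]
    by (auto simp: step_flow_def boundary_def delta_def eq_commute[of z])
qed

text \<open>This is the admissibility condition \<open>s\<^sup>+ - s\<^sup>- = t\<^sup>+ - t\<^sup>-\<close> at every point.\<close>

lemma closed_walk_flow:
  assumes "closed_walk X m u"
  shows "walk_flow m u = 0"
proof
  fix z
  have uX: "u i \<in> X" if "i \<le> m" for i using assms that unfolding closed_walk_def by blast
  show "walk_flow m u z = 0 z"
  proof (cases "z \<in> X")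
    case False
    have "step_flow (u i) (u (Suc i)) z = 0" if "i < m" for i
    proof -
      have "\<psi> (u i, u (Suc i)) \<in> basis X" if "u i < u (Suc i)"
        using inv.map_basis uX \<open>i < m\<close> that by (simp add: basis_def)
      moreover have "\<psi> (u (Suc i), u i) \<in> basis X" if "u (Suc i) < u i"
        using inv.map_basis uX \<open>i < m\<close> that by (simp add: basis_def)
      ultimately show ?thesis
        using False by (auto simp: step_flow_def boundary_def delta_def basis_def)
    qed
    then show ?thesis by (simp add: walk_flow_def sum_fun_apply)
  next
    case True
    have "walk_flow m u z = (\<Sum>i<m.
        of_bool (u i < u (Suc i) \<and> (\<exists>w\<in>X. z < w \<and> \<theta> (z, w) = (u i, u (Suc i))))
      - of_bool (u (Suc i) < u i \<and> (\<exists>w\<in>X. z < w \<and> \<theta> (z, w) = (u (Suc i), u i)))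
      - of_bool (u i < u (Suc i) \<and> (\<exists>w\<in>X. w < z \<and> \<theta> (w, z) = (u i, u (Suc i))))
      + of_bool (u (Suc i) < u i \<and> (\<exists>w\<in>X. w < z \<and> \<theta> (w, z) = (u (Suc i), u i))))"
      unfolding walk_flow_def sum_fun_apply
      by (intro sum.cong refl step_flow_eq uX True) simp_all
    also have "\<dots> = int (s_plus X \<theta> m u z) - int (s_minus X \<theta> m u z)
        - int (t_plus X \<theta> m u z) + int (t_minus X \<theta> m u z)"
      unfolding s_plus_def s_minus_def t_plus_def t_minus_def card_eq_sum_of_bool
      by (simp add: sum.distrib sum_subtractf)
    finally show ?thesis
      using in_AM_set assms True unfolding AM_set_def admissible_def by simp
  qed
qed

lemma walk_flow_append:
  assumes "u m = v 0"
  shows "walk_flow (m + n) (walk_append m u v) = walk_flow m u + walk_flow n v"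
proof (induction n)
  case 0
  have "(\<Sum>i<m. step_flow (walk_append m u v i) (walk_append m u v (Suc i))) = walk_flow m u"
    unfolding walk_flow_def walk_append_def by (rule sum.cong) auto
  then show ?case by (simp add: walk_flow_def)
next
  case (Suc n)
  have "walk_append m u v (m + n) = v n" "walk_append m u v (Suc (m + n)) = v (Suc n)"
    using assms by (auto simp: walk_append_def)
  then show ?case using Suc by (simp add: walk_flow_def add.assoc)
qed

lemma walk_flow_reverse: "walk_flow m (\<lambda>i. u (m - i)) = - walk_flow m u"
proof -
  have "walk_flow m (\<lambda>i. u (m - i)) = (\<Sum>i<m. step_flow (u (Suc (m - Suc i))) (u (m - Suc i)))"
    unfolding walk_flow_def by (intro sum.cong) (auto simp: Suc_diff_Suc)
  also have "\<dots> = (\<Sum>i<m. step_flow (u (Suc i)) (u i))"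
    by (rule sum.nat_diff_reindex)
  also have "\<dots> = (\<Sum>i<m. - step_flow (u i) (u (Suc i)))"
    by (rule sum.cong[OF refl], rule step_flow_swap)
  finally show ?thesis by (simp add: walk_flow_def sum_negf)
qed

lemma walk_flow_path_independent:
  assumes "walk X m u" "walk X n v" "u 0 = v 0" "u m = v n"
  shows "walk_flow m u = walk_flow n v"
proof -
  let ?w = "walk_append m u (\<lambda>i. v (n - i))"
  have "walk X (m + n) ?w" using walk_append[OF assms(1) walk_reverse[OF assms(2)]] assms(4) by simp
  moreover have "?w (m + n) = ?w 0" using assms(3,4) by (simp add: walk_append_def)
  ultimately have "walk_flow (m + n) ?w = 0" using closed_walk_flow closed_walk_iff by blast
  then show ?thesis using walk_flow_append[of u m "\<lambda>i. v (n - i)" n] assms(4) walk_flow_reverse[of n v]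
    by simp
qed

text \<open>By \<open>walk_flow_path_independent\<close> the choice of the walk from the root does not matter.\<close>

definition root :: 'a where
  "root = (SOME r. r \<in> X)"

definition potential :: "'a \<Rightarrow> 'a \<Rightarrow> int" where
  "potential v = case_prod walk_flow (SOME (m, u). walk X m u \<and> u 0 = root \<and> u m = v)"

lemma root_in_X: "root \<in> X"
  unfolding root_def using nontrivial by (meson someI)

lemma potential_walk:
  assumes "walk X m u" "u 0 = root" "u m = v"
  shows "potential v = walk_flow m u"
proof -
  define p where "p = (SOME (m, u). walk X m u \<and> u 0 = root \<and> u m = v)"
  have "\<exists>p. case p of (m, u) \<Rightarrow> walk X m u \<and> u 0 = root \<and> u m = v"
    using assms by blast
  then have "case p of (m', u') \<Rightarrow> walk X m' u' \<and> u' 0 = root \<and> u' m' = v"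
    unfolding p_def by (rule someI_ex)
  moreover obtain m' u' where "p = (m', u')" by fastforce
  ultimately have "walk X m' u'" "u' 0 = root" "u' m' = v" "potential v = walk_flow m' u'"
    unfolding potential_def p_def by simp_all
  then show ?thesis using walk_flow_path_independent[OF assms(1)] assms(2,3) by simp
qed

lemma potential_cover:
  assumes "covers X a b"
  shows "potential b = potential a + boundary (\<psi> (a, b))"
proof -
  have "a \<in> X" using assms unfolding covers_def by blast
  then obtain m u where u: "walk X m u" "u 0 = root" "u m = a"
    using walk_exists[OF finite_poset connected root_in_X] by blast
  let ?v = "\<lambda>i::nat. if i = 0 then a else b"
  have "walk X 1 ?v" using assms unfolding walk_def adjacent_def covers_def by auto
  then have "walk X (m + 1) (walk_append m u ?v)" by (rule walk_append[OF u(1)]) (simp add: u(3))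
  moreover have "walk_append m u ?v 0 = root" "walk_append m u ?v (m + 1) = b"
    using u by (auto simp: walk_append_def)
  ultimately have "potential b = walk_flow (m + 1) (walk_append m u ?v)"
    by (rule potential_walk)
  also have "\<dots> = potential a + step_flow a b"
    using walk_flow_append[of u m ?v 1] u potential_walk[OF u] by (simp add: walk_flow_def)
  finally show ?thesis
    using assms unfolding covers_def step_flow_def by simp
qed

lemma potential_chain_const:
  assumes E: "E \<in> max_chains X" and g: "chain_map X \<psi> s E K g" and ab: "a \<in> E" "b \<in> E"
  shows "potential a + signed_delta s (g a) = potential b + signed_delta s (g b)"
proof -
  have cover_step: "potential x + signed_delta s (g x) = potential y + signed_delta s (g y)"
    if "covers E x y" for x y
  proof -
    have "potential y = potential x + boundary (\<psi> (x, y))"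
      using potential_cover[OF max_chains_covers[OF E that]] .
    moreover have "x \<in> E" "y \<in> E" "x < y" using that unfolding covers_def by blast+
    then have "\<psi> (x, y) = orient s (g x) (g y)" by (rule inv.chain_map_pair_eq[OF E g])
    ultimately show ?thesis by (simp add: boundary_orient)
  qed
  have "finite E" using finite_subset[OF max_chains_subset[OF E] finite_poset] .
  have le: "potential x + signed_delta s (g x) = potential y + signed_delta s (g y)"
    if "x \<in> E" "y \<in> E" "x \<le> y" for x y
    using rtranclp_covers_if_le[OF \<open>finite E\<close> that]
  proof (induction rule: rtranclp_induct)
    case (step y z)
    then show ?case using cover_step[of y z] by simp
  qed simp
  from max_chains_comparable[OF E ab] show ?thesis
    using le[OF ab] le[OF ab(2,1)] by (elim disjE) (simp_all only:)
qed

lemma potential_diff: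
  assumes "a \<in> X" "b \<in> X" "a < b"
  shows "potential b - potential a = boundary (\<psi> (a, b))"
proof -
  have "{a, b} \<subseteq> X" "is_chain {a, b}" using assms unfolding is_chain_def by auto
  then obtain E s K g where E: "E \<in> max_chains X" "{a, b} \<subseteq> E" and g: "chain_map X \<psi> s E K g"
    by (rule inv.max_chain_through_map)
  then have "potential b - potential a = signed_delta s (g a) - signed_delta s (g b)"
    using potential_chain_const[OF E(1) g, of a b] by (simp add: algebra_simps)
  also have "\<dots> = boundary (\<psi> (a, b))"
    using inv.chain_map_pair_eq[OF E(1) g] E(2) assms(3) by (simp add: boundary_orient)
  finally show ?thesis .
qed

end

section \<open>Classes of linked maximal chains\<close>

lemma permutation_le_imp_eq:
  fixes g :: "'b \<Rightarrow> 'c::ordered_cancel_comm_monoid_add"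
  assumes "finite Q" "bij_betw F Q Q" and le: "\<And>x. x \<in> Q \<Longrightarrow> g x \<le> g (F x)" and "x \<in> Q"
  shows "g x = g (F x)"
proof (rule ccontr)
  assume "g x \<noteq> g (F x)"
  then have "sum g Q < sum (g \<circ> F) Q"
    using le assms(1,4) by (intro sum_strict_mono_ex1) (auto intro: order.not_eq_order_implies_strict)
  then show False using sum.reindex_bij_betw[OF assms(2), of g] by simp
qed

definition realizes_iso :: "('a::order \<times> 'a \<Rightarrow> 'a \<times> 'a) \<Rightarrow> 'a set \<Rightarrow> 'a set \<Rightarrow> ('a \<Rightarrow> 'a) \<Rightarrow> bool" where
  "realizes_iso \<theta> A B lam \<longleftrightarrow> bij_betw lam A B \<and>
     (((\<forall>x\<in>A. \<forall>y\<in>A. x \<le> y \<longleftrightarrow> lam x \<le> lam y) \<and>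
       (\<forall>x\<in>A. \<forall>y\<in>A. x < y \<longrightarrow> \<theta> (x, y) = (lam x, lam y))) \<or>
      ((\<forall>x\<in>A. \<forall>y\<in>A. x \<le> y \<longleftrightarrow> lam y \<le> lam x) \<and>
       (\<forall>x\<in>A. \<forall>y\<in>A. x < y \<longrightarrow> \<theta> (x, y) = (lam y, lam x))))"

context
  fixes \<mu> :: "'a::order \<Rightarrow> 'a" and A B \<psi> \<theta> s
  assumes \<mu>: "bij_betw \<mu> A B" and pairs: "\<psi> ` basis A = basis B"
    and orient: "\<And>u v. (u, v) \<in> basis A \<Longrightarrow> \<psi> (u, v) = orient s (\<mu> u) (\<mu> v)"
    and inverse: "\<And>p. p \<in> basis A \<Longrightarrow> \<theta> (\<psi> p) = p"
begin

lemma pair_bijection_inv_into: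
  assumes "x \<in> B" "y \<in> B"
  shows "x < y \<longleftrightarrow> orient s (inv_into A \<mu> x) (inv_into A \<mu> y) \<in> basis A"
    and "x < y \<Longrightarrow> \<theta> (x, y) = orient s (inv_into A \<mu> x) (inv_into A \<mu> y)"
proof -
  let ?e = "orient s (inv_into A \<mu> x) (inv_into A \<mu> y)"
  have \<psi>_e: "\<psi> ?e = (x, y)" if "?e \<in> basis A"
    using orient that assms \<mu> unfolding orient_def bij_betw_def by (cases s) (auto simp: f_inv_into_f)
  show less_iff: "x < y \<longleftrightarrow> ?e \<in> basis A"
  proof
    assume "x < y"
    then have "(x, y) \<in> \<psi> ` basis A" using pairs assms by (simp add: basis_def)
    then obtain u v where uv: "(u, v) \<in> basis A" "(x, y) = \<psi> (u, v)" by auto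
    then have "?e = (u, v)"
      using orient[OF uv(1)] \<mu> unfolding basis_def orient_def bij_betw_def by (cases s) auto
    then show "?e \<in> basis A" using uv(1) by simp
  next
    assume "?e \<in> basis A"
    then have "\<psi> ?e \<in> basis B" using pairs by blast
    then show "x < y" using \<psi>_e \<open>?e \<in> basis A\<close> by (simp add: basis_def)
  qed
  assume "x < y"
  then show "\<theta> (x, y) = ?e" using inverse \<psi>_e less_iff by metis
qed

lemma realizes_iso_inv_into: "realizes_iso \<theta> B A (inv_into A \<mu>)"
proof -
  let ?lam = "inv_into A \<mu>"
  have lam: "bij_betw ?lam B A" by (rule bij_betw_inv_into[OF \<mu>])
  have inj: "?lam x = ?lam y \<longleftrightarrow> x = y" if "x \<in> B" "y \<in> B" for x y
    using lam that unfolding bij_betw_def inj_on_def by blast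
  have in_A: "?lam x \<in> A" if "x \<in> B" for x
    using lam that by (simp add: bij_betw_apply)
  note less_iff = pair_bijection_inv_into(1) and image = pair_bijection_inv_into(2)
  show ?thesis
  proof (cases s)
    case True
    then have "x \<le> y \<longleftrightarrow> ?lam x \<le> ?lam y" if "x \<in> B" "y \<in> B" for x y
      using less_iff[OF that] inj[OF that] in_A that
      by (auto simp: orient_def basis_def order.order_iff_strict)
    then show ?thesis using lam image True unfolding realizes_iso_def by (auto simp: orient_def)
  next
    case False
    then have "x \<le> y \<longleftrightarrow> ?lam y \<le> ?lam x" if "x \<in> B" "y \<in> B" for x y
      using less_iff[OF that] inj[OF that] in_A that
      by (auto simp: orient_def basis_def order.order_iff_strict)
    then show ?thesis using lam image False unfolding realizes_iso_def by (auto simp: orient_def)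
  qed
qed

end

context admissible_map
begin

lemma class_potential:
  assumes D0: "D0 \<in> max_chains X" and g0: "chain_map X \<psi> s D0 K0 g0"
  shows "\<exists>c. \<forall>D\<in>sim_rel X `` {D0}. \<exists>K g. chain_map X \<psi> s D K g \<and>
           (\<forall>d\<in>D. potential d + signed_delta s (g d) = c)"
proof -
  obtain d0 where d0: "d0 \<in> D0" using max_chains_nontrivial[OF D0] by blast
  define c where "c = potential d0 + signed_delta s (g0 d0)"
  define P where "P D \<longleftrightarrow> (\<exists>K g. chain_map X \<psi> s D K g \<and>
      (\<forall>d\<in>D. potential d + signed_delta s (g d) = c))" for D
  have P0: "P D0"
    unfolding P_def c_def using g0 potential_chain_const[OF D0 g0 _ d0] by blast
  have step: "P D'" if "P D" and linked: "(D, D') \<in> linked_rel X" for D D'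
  proof -
    obtain K g where g: "chain_map X \<psi> s D K g" and c: "\<forall>d\<in>D. potential d + signed_delta s (g d) = c"
      using \<open>P D\<close> unfolding P_def by blast
    have D: "D \<in> max_chains X" "D' \<in> max_chains X" using linked unfolding linked_rel_def by blast+
    obtain s' K' g' where g': "chain_map X \<psi> s' D' K' g'" using inv.exists_chain_map[OF D(2)] by blast
    obtain x where x: "x \<in> D" "x \<in> D'" "x \<notin> minimal_elems X" "x \<notin> maximal_elems X"
      using linked unfolding linked_rel_def by blast
    have "s' = s" "g' x = g x" using inv.chain_maps_agree_at_interior[OF D x g g'] by blast+
    then have "potential d + signed_delta s (g' d) = c" if "d \<in> D'" for d
      using potential_chain_const[OF D(2) g' that x(2)] c x(1) by simp
    then show "P D'" unfolding P_def using g' \<open>s' = s\<close> by blast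
  qed
  have "P D" if "(D0, D) \<in> (linked_rel X)\<^sup>+" for D
    using that by (induction rule: trancl_induct) (use P0 step in blast)+
  then show ?thesis using P0 unfolding sim_rel_def P_def by blast
qed

lemma supp_class_subset: "\<DD> \<in> max_chains X // sim_rel X \<Longrightarrow> supp \<DD> \<subseteq> X"
  using in_quotient_imp_subset[OF sim_rel_equiv] max_chains_subset unfolding supp_def by blast

lemma finite_supp_class: "\<DD> \<in> max_chains X // sim_rel X \<Longrightarrow> finite (supp \<DD>)"
  by (rule finite_subset[OF supp_class_subset finite_poset])

lemma class_common_chain_map:
  assumes "\<DD> \<in> max_chains X // sim_rel X"
  shows "\<exists>s \<mu> c. (\<forall>D\<in>\<DD>. chain_map X \<psi> s D (image_chain \<psi> D) \<mu>) \<and>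
           (\<forall>d\<in>supp \<DD>. potential d + signed_delta s (\<mu> d) = c)"
proof -
  obtain D0 where D0: "D0 \<in> max_chains X" "\<DD> = sim_rel X `` {D0}"
    using assms by (metis quotientE)
  obtain s K0 g0 where g0: "chain_map X \<psi> s D0 K0 g0" using inv.exists_chain_map[OF D0(1)] by blast
  obtain c where c: "\<forall>D\<in>\<DD>. \<exists>K g. chain_map X \<psi> s D K g \<and>
      (\<forall>d\<in>D. potential d + signed_delta s (g d) = c)"
    using class_potential[OF D0(1) g0] unfolding D0(2) by blast
  define \<mu> where "\<mu> d = (THE k. potential d + signed_delta s k = c)" for d
  have \<mu>_eq: "\<mu> d = k" if "potential d + signed_delta s k = c" for d k
    unfolding \<mu>_def
  proof (rule the_equality)
    fix k' assume "potential d + signed_delta s k' = c"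
    then have "potential d + signed_delta s k' = potential d + signed_delta s k" using that by simp
    then have "signed_delta s k' = signed_delta s k" by simp
    then show "k' = k" by (rule signed_delta_inj)
  qed (rule that)
  have "chain_map X \<psi> s D (image_chain \<psi> D) \<mu> \<and> (\<forall>d\<in>D. potential d + signed_delta s (\<mu> d) = c)"
    if "D \<in> \<DD>" for D
  proof -
    obtain K g where g: "chain_map X \<psi> s D K g" "\<forall>d\<in>D. potential d + signed_delta s (g d) = c"
      using c \<open>D \<in> \<DD>\<close> by blast
    have "D \<in> max_chains X" using D0 sim_rel_subset \<open>D \<in> \<DD>\<close> by blast
    have "\<mu> d = g d" if "d \<in> D" for d using g(2) that \<mu>_eq by blast
    then show ?thesis
      using g inv.chain_map_target[OF \<open>D \<in> max_chains X\<close> g(1)] chain_map_cong[of D \<mu> g] by simp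
  qed
  then show ?thesis unfolding supp_def by blast
qed

lemma class_correspondence:
  assumes \<DD>: "\<DD> \<in> max_chains X // sim_rel X"
  obtains s \<mu> where "\<mu> ` supp \<DD> = supp (image_chain \<psi> ` \<DD>)"
    and "\<And>u v. (u, v) \<in> basis (supp \<DD>) \<Longrightarrow> \<psi> (u, v) = orient s (\<mu> u) (\<mu> v)"
proof -
  obtain s \<mu> c where \<mu>: "\<And>D. D \<in> \<DD> \<Longrightarrow> chain_map X \<psi> s D (image_chain \<psi> D) \<mu>"
    and potential_\<mu>: "\<And>d. d \<in> supp \<DD> \<Longrightarrow> potential d + signed_delta s (\<mu> d) = c"
    using class_common_chain_map[OF \<DD>] by blast
  have chains: "D \<in> max_chains X" if "D \<in> \<DD>" for D
    using that in_quotient_imp_subset[OF sim_rel_equiv \<DD>] by blast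
  have "\<mu> ` D = image_chain \<psi> D" if "D \<in> \<DD>" for D
    by (rule inv.chain_map_image[OF chains[OF that] \<mu>[OF that]])
  then have "(`) \<mu> ` \<DD> = image_chain \<psi> ` \<DD>" by (rule image_cong[OF refl])
  then have "\<mu> ` supp \<DD> = supp (image_chain \<psi> ` \<DD>)"
    unfolding supp_def image_Union by simp
  moreover have "\<psi> (u, v) = orient s (\<mu> u) (\<mu> v)" if "(u, v) \<in> basis (supp \<DD>)" for u v
  proof -
    have uv: "u \<in> supp \<DD>" "v \<in> supp \<DD>" "u < v" using that unfolding basis_def by blast+
    then have X: "u \<in> X" "v \<in> X" using supp_class_subset[OF \<DD>] by blast+
    then have "boundary (\<psi> (u, v)) = potential v - potential u"
      using potential_diff[OF _ _ uv(3)] by simp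
    also have "\<dots> = boundary (orient s (\<mu> u) (\<mu> v))"
      using potential_\<mu>[OF uv(1)] potential_\<mu>[OF uv(2)] by (simp add: boundary_orient algebra_simps)
    finally have "boundary (\<psi> (u, v)) = boundary (orient s (\<mu> u) (\<mu> v))" .
    moreover have "fst (\<psi> (u, v)) \<noteq> snd (\<psi> (u, v))"
      using inv.map_less(1)[OF X uv(3)] by simp
    ultimately show ?thesis using boundary_inj by blast
  qed
  ultimately show ?thesis by (rule that)
qed

lemma class_pair_map:
  assumes \<DD>: "\<DD> \<in> max_chains X // sim_rel X" and \<mu>: "\<mu> ` supp \<DD> = supp (image_chain \<psi> ` \<DD>)"
    and orient: "\<And>u v. (u, v) \<in> basis (supp \<DD>) \<Longrightarrow> \<psi> (u, v) = orient s (\<mu> u) (\<mu> v)"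
  shows "inj_on \<psi> (basis (supp \<DD>))" "\<psi> ` basis (supp \<DD>) \<subseteq> basis (supp (image_chain \<psi> ` \<DD>))"
proof -
  have sub: "basis (supp \<DD>) \<subseteq> basis X"
    by (rule basis_mono[OF supp_class_subset[OF \<DD>]])
  then show "inj_on \<psi> (basis (supp \<DD>))"
    by (rule inj_on_subset[OF bij_betw_imp_inj_on[OF inv.bij_betw_basis]])
  show "\<psi> ` basis (supp \<DD>) \<subseteq> basis (supp (image_chain \<psi> ` \<DD>))"
  proof
    fix e assume "e \<in> \<psi> ` basis (supp \<DD>)"
    then obtain p where p: "p \<in> basis (supp \<DD>)" "e = \<psi> p" by blast
    obtain u v where "p = (u, v)" by fastforce
    with p have uv: "(u, v) \<in> basis (supp \<DD>)" "e = \<psi> (u, v)" by simp_all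
    have "\<psi> (u, v) \<in> basis X" by (rule inv.map_basis[OF subsetD[OF sub uv(1)]])
    moreover have "u \<in> supp \<DD>" "v \<in> supp \<DD>" using uv(1) by (simp_all add: basis_def)
    then have "\<mu> u \<in> supp (image_chain \<psi> ` \<DD>)" "\<mu> v \<in> supp (image_chain \<psi> ` \<DD>)"
      unfolding \<mu>[symmetric] by simp_all
    ultimately show "e \<in> basis (supp (image_chain \<psi> ` \<DD>))"
      using uv(2) orient[OF uv(1)] unfolding basis_def orient_def by (cases s) auto
  qed
qed

lemma class_card_le:
  assumes \<DD>: "\<DD> \<in> max_chains X // sim_rel X"
  shows "card (supp (image_chain \<psi> ` \<DD>)) \<le> card (supp \<DD>)"
    and "card (basis (supp \<DD>)) \<le> card (basis (supp (image_chain \<psi> ` \<DD>)))"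
proof -
  obtain s \<mu> where \<mu>: "\<mu> ` supp \<DD> = supp (image_chain \<psi> ` \<DD>)"
    and orient: "\<And>u v. (u, v) \<in> basis (supp \<DD>) \<Longrightarrow> \<psi> (u, v) = orient s (\<mu> u) (\<mu> v)"
    using class_correspondence[OF \<DD>] by metis
  have fin: "finite (supp \<DD>)" by (rule finite_supp_class[OF \<DD>])
  show "card (supp (image_chain \<psi> ` \<DD>)) \<le> card (supp \<DD>)"
    using card_image_le[OF fin, of \<mu>] \<mu> by simp
  have "finite (basis (supp (image_chain \<psi> ` \<DD>)))"
    using finite_basis[OF finite_imageI[OF fin, of \<mu>]] \<mu> by simp
  then show "card (basis (supp \<DD>)) \<le> card (basis (supp (image_chain \<psi> ` \<DD>)))"
    using card_inj_on_le class_pair_map[OF \<DD> \<mu> orient] by blast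
qed

text \<open>Summed over all classes, which \<open>image_chain \<psi>\<close> permutes, the inequalities of
  \<open>class_card_le\<close> become equalities, so none of them can be strict.\<close>

lemma class_card_eq:
  assumes "\<DD> \<in> max_chains X // sim_rel X"
  shows "card (supp (image_chain \<psi> ` \<DD>)) = card (supp \<DD>)"
    and "card (basis (supp \<DD>)) = card (basis (supp (image_chain \<psi> ` \<DD>)))"
proof -
  have fin: "finite (max_chains X // sim_rel X)"
    by (rule finite_quotient[OF finite_max_chains[OF finite_poset] sim_rel_subset])
  note permutation = permutation_le_imp_eq[OF fin inv.image_chain_classes_bij _ assms]
  show "card (supp (image_chain \<psi> ` \<DD>)) = card (supp \<DD>)"
    using permutation[of "\<lambda>\<DD>. - int (card (supp \<DD>))"] class_card_le(1) by simp
  show "card (basis (supp \<DD>)) = card (basis (supp (image_chain \<psi> ` \<DD>)))"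
    using permutation[of "\<lambda>\<DD>. card (basis (supp \<DD>))"] class_card_le(2) by simp
qed

lemma class_bijection:
  assumes \<DD>: "\<DD> \<in> max_chains X // sim_rel X"
  obtains s \<mu> where "bij_betw \<mu> (supp \<DD>) (supp (image_chain \<psi> ` \<DD>))"
    and "\<psi> ` basis (supp \<DD>) = basis (supp (image_chain \<psi> ` \<DD>))"
    and "\<And>u v. (u, v) \<in> basis (supp \<DD>) \<Longrightarrow> \<psi> (u, v) = orient s (\<mu> u) (\<mu> v)"
proof -
  obtain s \<mu> where \<mu>: "\<mu> ` supp \<DD> = supp (image_chain \<psi> ` \<DD>)"
    and orient: "\<And>u v. (u, v) \<in> basis (supp \<DD>) \<Longrightarrow> \<psi> (u, v) = orient s (\<mu> u) (\<mu> v)"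
    using class_correspondence[OF \<DD>] by metis
  have fin: "finite (supp \<DD>)" by (rule finite_supp_class[OF \<DD>])
  have "bij_betw \<mu> (supp \<DD>) (supp (image_chain \<psi> ` \<DD>))"
    using class_card_eq(1)[OF \<DD>] \<mu> eq_card_imp_inj_on[OF fin, of \<mu>] by (simp add: bij_betw_def)
  moreover have "\<psi> ` basis (supp \<DD>) = basis (supp (image_chain \<psi> ` \<DD>))"
  proof (rule card_subset_eq)
    show "finite (basis (supp (image_chain \<psi> ` \<DD>)))"
      using finite_basis[OF finite_imageI[OF fin, of \<mu>]] \<mu> by simp
    show "\<psi> ` basis (supp \<DD>) \<subseteq> basis (supp (image_chain \<psi> ` \<DD>))"
      by (rule class_pair_map(2)[OF \<DD> \<mu> orient])
    show "card (\<psi> ` basis (supp \<DD>)) = card (basis (supp (image_chain \<psi> ` \<DD>)))"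
      using class_card_eq(2)[OF \<DD>] card_image[OF class_pair_map(1)[OF \<DD> \<mu> orient]] by simp
  qed
  ultimately show ?thesis using that orient by blast
qed

lemma class_iso:
  assumes "\<CC> \<in> max_chains X // sim_rel X" "C \<in> \<CC>" "chain_image X \<theta> C D"
  shows "\<exists>lam. realizes_iso \<theta> (supp \<CC>) (supp (sim_rel X `` {D})) lam"
proof -
  obtain C0 where "\<CC> = sim_rel X `` {C0}" using assms(1) by (rule quotientE)
  then have "(C0, C) \<in> sim_rel X" using assms(2) by blast
  then have C: "C \<in> max_chains X" "\<CC> = sim_rel X `` {C}"
    using sim_rel_subset equiv_class_eq[OF sim_rel_equiv \<open>(C0, C) \<in> sim_rel X\<close>]
      \<open>\<CC> = sim_rel X `` {C0}\<close> by auto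
  have D: "D = image_chain \<theta> C" "D \<in> max_chains X"
    using chain_image_imp_chain_map[OF assms(3)] chain_map_target[OF C(1)]
      image_chain_max_chains[OF C(1)] by auto
  let ?\<DD> = "sim_rel X `` {D}"
  have \<DD>: "?\<DD> \<in> max_chains X // sim_rel X" by (rule quotientI[OF D(2)])
  have class_\<CC>: "image_chain \<psi> ` ?\<DD> = \<CC>"
    using inv.image_chain_class[OF D(2)] image_chain_inverse[OF C(1)] C(2) D(1) by simp
  obtain s \<mu> where \<mu>: "bij_betw \<mu> (supp ?\<DD>) (supp \<CC>)"
    and pairs: "\<psi> ` basis (supp ?\<DD>) = basis (supp \<CC>)"
    and orient: "\<And>u v. (u, v) \<in> basis (supp ?\<DD>) \<Longrightarrow> \<psi> (u, v) = orient s (\<mu> u) (\<mu> v)"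
    using class_bijection[OF \<DD>] unfolding class_\<CC> by metis
  have "\<theta> (\<psi> p) = p" if "p \<in> basis (supp ?\<DD>)" for p
    using map_inv_into subsetD[OF basis_mono[OF supp_class_subset[OF \<DD>]] that] by blast
  then show ?thesis using realizes_iso_inv_into[OF \<mu> pairs orient] by blast
qed

end
lemma subsingleton_class_iso:
  assumes X: "\<forall>a\<in>X. \<forall>b\<in>X. a = b" and "\<CC> \<in> max_chains X // sim_rel X" "C \<in> \<CC>"
    and "chain_image X \<theta> C D"
  shows "\<exists>lam. realizes_iso \<theta> (supp \<CC>) (supp (sim_rel X `` {D})) lam"
proof -
  have "is_chain X" using X unfolding is_chain_def by (metis order.refl)
  then have "X \<in> max_chains X" unfolding max_chains_def by blast
  moreover have "K = X" if "K \<in> max_chains X" for K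
    using that \<open>is_chain X\<close> unfolding max_chains_def by blast
  ultimately have max_chains: "max_chains X = {X}" by blast
  then have "sim_rel X `` {X} = {X}"
    using sim_rel_subset[of X] equiv_class_self[OF sim_rel_equiv, of X] by auto
  moreover have "D = X"
    using assms(4) max_chains unfolding chain_image_def incr_to_def decr_to_def by blast
  moreover have "\<CC> = sim_rel X `` {X}" using assms(2) max_chains by (auto elim: quotientE)
  moreover have "\<not> x < y" if "x \<in> X" "y \<in> X" for x y :: 'a
    using X that by auto
  ultimately show ?thesis
    by (intro exI[of _ id]) (auto simp: supp_def realizes_iso_def)
qed

theorem theorem3p10:
  fixes X :: "'a::order set" and \<theta> :: "'a \<times> 'a \<Rightarrow> 'a \<times> 'a"
    and \<CC> :: "'a set set" and C D :: "'a set"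
  assumes "finite X" and "connected_poset X"
    and "\<theta> \<in> AM_set X"
    and "\<CC> \<in> max_chains X // sim_rel X"
    and "C \<in> \<CC>" and "chain_image X \<theta> C D"
  shows "\<exists>lam. bij_betw lam (supp \<CC>) (supp (sim_rel X `` {D})) \<and>
     (((\<forall>x\<in>supp \<CC>. \<forall>y\<in>supp \<CC>. x \<le> y \<longleftrightarrow> lam x \<le> lam y) \<and>
       (\<forall>x\<in>supp \<CC>. \<forall>y\<in>supp \<CC>. x < y \<longrightarrow> \<theta> (x, y) = (lam x, lam y)))
     \<or>
      ((\<forall>x\<in>supp \<CC>. \<forall>y\<in>supp \<CC>. x \<le> y \<longleftrightarrow> lam y \<le> lam x) \<and>
       (\<forall>x\<in>supp \<CC>. \<forall>y\<in>supp \<CC>. x < y \<longrightarrow> \<theta> (x, y) = (lam y, lam x))))"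
proof (cases "\<exists>a\<in>X. \<exists>b\<in>X. a \<noteq> b")
  case True
  interpret admissible_map X \<theta>
    using assms(1,2) True assms(3) by (rule admissible_map.intro)
  show ?thesis using class_iso[OF assms(4-6)] unfolding realizes_iso_def .
next
  case False
  then show ?thesis using subsingleton_class_iso[OF _ assms(4-6)] unfolding realizes_iso_def by blast
qed

end
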